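(* Fix $n\ge1$ and $k\ge0$. There is a finite $k$-graph whose topological realisation is homeomorphic to a wedge of $n$ copies of the $k$-sphere.
   Context: A $k$-graph is a countable small category $\Lambda$ with a functor $d:\Lambda\to\mathbb{N}^k$ ($\mathbb{N}^0=\{0\}$) such that, writing $\Lambda^n=d^{-1}(n)$, composition is a bijection from $\{(\mu,\nu)\in\Lambda^m\times\Lambda^n:s(\mu)=r(\nu)\}$ onto $\Lambda^{m+n}$. For $k\ge1$: $\lambda(m,n)$ is the unique $\beta\in\Lambda^{n-m}$ with $\lambda=\alpha\beta\gamma$, $d(\alpha)=m$; $\lceil t\rceil,\lfloor t\rfloor$ are coordinatewise ceiling/floor; $[0,m]=\{t\in\mathbb{R}^k:0\le t\le m\}$; the topological realisation $X_\Lambda$ is the quotient of $\bigsqcup_\lambda\{\lambda\}\times[0,d(\lambda)]$ by $(\mu,s)\sim(\nu,t)\iff\mu(\lfloor s\rfloor,\lceil s\rceil)=\nu(\lfloor t\rfloor,\lceil t\rceil)$ and $s-\lfloor s\rfloor=t-\lfloor t\rfloor$. For $k=0$, $X_\Lambda$ is the discrete space $\Lambda^0$. A wedge of spaces is their disjoint union with one chosen point from each identified to a single point. *)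

theory Defs
  imports "HOL-Analysis.Analysis"
begin

definition quot_class :: "'b topology \<Rightarrow> ('b \<Rightarrow> 'b \<Rightarrow> bool) \<Rightarrow> 'b \<Rightarrow> 'b set" where
  "quot_class X R x = {y \<in> topspace X. R x y}"

definition quotient_topology :: "'b topology \<Rightarrow> ('b \<Rightarrow> 'b \<Rightarrow> bool) \<Rightarrow> 'b set topology" where
  "quotient_topology X R =
     topology (\<lambda>U. U \<subseteq> quot_class X R ` topspace X \<and> openin X (\<Union>U))"

text \<open>A small category presented by its set of morphisms; objects are identified with
  identity morphisms, src / rng give the identities at source and range.
  Degrees lie in N^k, represented as functions nat => nat vanishing from k on.\<close>

record 'a kgraph =
  Mor  :: "'a set"
  src  :: "'a \<Rightarrow> 'a"
  rng  :: "'a \<Rightarrow> 'a"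
  comp :: "'a \<Rightarrow> 'a \<Rightarrow> 'a"
  deg  :: "'a \<Rightarrow> nat \<Rightarrow> nat"

definition in_Nk :: "nat \<Rightarrow> (nat \<Rightarrow> nat) \<Rightarrow> bool" where
  "in_Nk k m \<longleftrightarrow> (\<forall>i\<ge>k. m i = 0)"

definition small_category :: "'a kgraph \<Rightarrow> bool" where
  "small_category L \<longleftrightarrow>
     countable (Mor L) \<and>
     (\<forall>\<mu>\<in>Mor L. src L \<mu> \<in> Mor L \<and> rng L \<mu> \<in> Mor L) \<and>
     (\<forall>\<mu>\<in>Mor L. src L (src L \<mu>) = src L \<mu> \<and> rng L (src L \<mu>) = src L \<mu> \<and>
                 src L (rng L \<mu>) = rng L \<mu> \<and> rng L (rng L \<mu>) = rng L \<mu>) \<and>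
     (\<forall>\<mu>\<in>Mor L. comp L \<mu> (src L \<mu>) = \<mu> \<and> comp L (rng L \<mu>) \<mu> = \<mu>) \<and>
     (\<forall>\<mu>\<in>Mor L. \<forall>\<nu>\<in>Mor L. src L \<mu> = rng L \<nu> \<longrightarrow>
        comp L \<mu> \<nu> \<in> Mor L \<and> src L (comp L \<mu> \<nu>) = src L \<nu> \<and> rng L (comp L \<mu> \<nu>) = rng L \<mu>) \<and>
     (\<forall>\<mu>\<in>Mor L. \<forall>\<nu>\<in>Mor L. \<forall>\<rho>\<in>Mor L. src L \<mu> = rng L \<nu> \<longrightarrow> src L \<nu> = rng L \<rho> \<longrightarrow>
        comp L (comp L \<mu> \<nu>) \<rho> = comp L \<mu> (comp L \<nu> \<rho>))"

definition is_kgraph :: "nat \<Rightarrow> 'a kgraph \<Rightarrow> bool" where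
  "is_kgraph k L \<longleftrightarrow>
     small_category L \<and>
     (\<forall>\<mu>\<in>Mor L. in_Nk k (deg L \<mu>)) \<and>
     \<comment> \<open>d is a functor to N^k\<close>
     (\<forall>\<mu>\<in>Mor L. deg L (src L \<mu>) = (\<lambda>i. 0) \<and> deg L (rng L \<mu>) = (\<lambda>i. 0)) \<and>
     (\<forall>\<mu>\<in>Mor L. \<forall>\<nu>\<in>Mor L. src L \<mu> = rng L \<nu> \<longrightarrow>
        deg L (comp L \<mu> \<nu>) = (\<lambda>i. deg L \<mu> i + deg L \<nu> i)) \<and>
     \<comment> \<open>unique factorisation: composition is a bijection onto Lambda^(m+n)\<close>
     (\<forall>l\<in>Mor L. \<forall>m n. in_Nk k m \<longrightarrow> in_Nk k n \<longrightarrow> deg L l = (\<lambda>i. m i + n i) \<longrightarrow>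
        (\<exists>!p. fst p \<in> Mor L \<and> snd p \<in> Mor L \<and> src L (fst p) = rng L (snd p) \<and>
                    deg L (fst p) = m \<and> deg L (snd p) = n \<and> l = comp L (fst p) (snd p)))"

definition vertices :: "'a kgraph \<Rightarrow> 'a set" where
  "vertices L = {\<mu> \<in> Mor L. deg L \<mu> = (\<lambda>i. 0)}"

definition finite_kgraph :: "'a kgraph \<Rightarrow> bool" where
  "finite_kgraph L \<longleftrightarrow> (\<forall>n. finite {\<mu> \<in> Mor L. deg L \<mu> = n})"

text \<open>lambda(m,n): the unique beta of degree n - m with lambda = alpha beta gamma, d(alpha) = m.\<close>
definition seg :: "'a kgraph \<Rightarrow> 'a \<Rightarrow> (nat \<Rightarrow> nat) \<Rightarrow> (nat \<Rightarrow> nat) \<Rightarrow> 'a" where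
  "seg L l m n = (THE \<beta>. \<beta> \<in> Mor L \<and> deg L \<beta> = (\<lambda>i. n i - m i) \<and>
      (\<exists>\<alpha>\<in>Mor L. \<exists>\<gamma>\<in>Mor L. deg L \<alpha> = m \<and> src L \<alpha> = rng L \<beta> \<and> src L \<beta> = rng L \<gamma> \<and>
          l = comp L (comp L \<alpha> \<beta>) \<gamma>))"

definition flr :: "(nat \<Rightarrow> real) \<Rightarrow> nat \<Rightarrow> nat" where
  "flr t = (\<lambda>i. nat \<lfloor>t i\<rfloor>)"

definition cel :: "(nat \<Rightarrow> real) \<Rightarrow> nat \<Rightarrow> nat" where
  "cel t = (\<lambda>i. nat \<lceil>t i\<rceil>)"

text \<open>The cube [0, m] in R^k (points of R^k are functions nat => real vanishing from k on).\<close>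
definition cube :: "nat \<Rightarrow> (nat \<Rightarrow> nat) \<Rightarrow> (nat \<Rightarrow> real) topology" where
  "cube k m = subtopology (Euclidean_space k) {t. \<forall>i<k. 0 \<le> t i \<and> t i \<le> real (m i)}"

definition real_rel :: "'a kgraph \<Rightarrow> ('a \<times> (nat \<Rightarrow> real)) \<Rightarrow> ('a \<times> (nat \<Rightarrow> real)) \<Rightarrow> bool" where
  "real_rel L p q \<longleftrightarrow>
     (case p of (\<mu>, s) \<Rightarrow> case q of (\<nu>, t) \<Rightarrow>
        seg L \<mu> (flr s) (cel s) = seg L \<nu> (flr t) (cel t) \<and>
        (\<lambda>i. s i - of_int \<lfloor>s i\<rfloor>) = (\<lambda>i. t i - of_int \<lfloor>t i\<rfloor>))"

text \<open>Topological realisation. For k = 0 it is the discrete space Lambda^0, encoded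
  (to have a uniform type) via the injection v |-> {(v, 0)}.\<close>
definition realisation :: "nat \<Rightarrow> 'a kgraph \<Rightarrow> ('a \<times> (nat \<Rightarrow> real)) set topology" where
  "realisation k L =
     (if k = 0 then discrete_topology ((\<lambda>v. {(v, \<lambda>i. 0)}) ` vertices L)
      else quotient_topology (sum_topology (\<lambda>l. cube k (deg L l)) (Mor L)) (real_rel L))"

definition sphere_base :: "nat \<Rightarrow> real" where
  "sphere_base = (\<lambda>i. if i = 0 then 1 else 0)"

definition wedge_rel :: "(nat \<times> (nat \<Rightarrow> real)) \<Rightarrow> (nat \<times> (nat \<Rightarrow> real)) \<Rightarrow> bool" where
  "wedge_rel p q \<longleftrightarrow> p = q \<or> (snd p = sphere_base \<and> snd q = sphere_base)"

definition sphere_wedge :: "nat \<Rightarrow> nat \<Rightarrow> (nat \<times> (nat \<Rightarrow> real)) set topology" where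
  "sphere_wedge n k = quotient_topology (sum_topology (\<lambda>i. nsphere k) {..<n}) wedge_rel"

end

theory Submission
  imports Defs
begin

text \<open>
  Both spaces are identified with one concrete compact subspace \<open>W\<close> of \<open>\<real>\<^sup>\<nat>\<close>.  For the wedge,
  each sphere point is rescaled to the unit sphere of the gauge \<open>|x\<^sub>0| + |x\<^sub>1| + spread\<close>, where
  \<open>spread\<close> is the oscillation of \<open>0, x\<^sub>2, \<dots>, x\<^sub>k\<close>, and the colour \<open>i < n\<close> of the sphere is
  recorded in coordinate \<open>k + 1\<close>, weighted so that it vanishes exactly at the base point.
  The gauge sphere is covered by four images of the unit cube \<open>[0,1]\<^sup>k\<close>, one for each pair
  of signs of \<open>x\<^sub>0\<close> and \<open>x\<^sub>1\<close>; this cubical decomposition is realised by a \<open>k\<close>-graph, namely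
  the category of comparable pairs of a finite poset of cube corners tagged by a sign bit and
  a colour.  Every point of the realisation lies in a unique cell, which is mapped into \<open>W\<close>;
  the resulting map is continuous, its fibres are the classes of the realisation relation,
  and its image is \<open>W\<close>.  Both spaces are quotients of compact spaces by the kernel of a
  continuous map into the Hausdorff space \<open>\<real>\<^sup>\<nat>\<close>, hence both are homeomorphic to \<open>W\<close>.
\<close>

section \<open>Quotients of compact spaces\<close>

definition induced_map :: "('b \<Rightarrow> 'c) \<Rightarrow> 'b set \<Rightarrow> 'c" where
  "induced_map g A = g (SOME x. x \<in> A)"

context
  fixes X :: "'b topology" and R :: "'b \<Rightarrow> 'b \<Rightarrow> bool" and f :: "'b \<Rightarrow> 'c"
  assumes kernel: "\<And>p q. p \<in> topspace X \<Longrightarrow> q \<in> topspace X \<Longrightarrow> R p q \<longleftrightarrow> f p = f q"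
begin

lemma quot_class_kernel:
  "x \<in> topspace X \<Longrightarrow> quot_class X R x = {y \<in> topspace X. f y = f x}"
  using kernel by (auto simp: quot_class_def)

lemma openin_quotient_topology_kernel:
  "openin (quotient_topology X R) = (\<lambda>U. U \<subseteq> quot_class X R ` topspace X \<and> openin X (\<Union>U))"
proof -
  have "istopology (\<lambda>U. U \<subseteq> quot_class X R ` topspace X \<and> openin X (\<Union>U))"
    unfolding istopology_def
  proof (rule conjI; intro allI impI)
    fix S T assume S: "S \<subseteq> quot_class X R ` topspace X \<and> openin X (\<Union>S)"
      and T: "T \<subseteq> quot_class X R ` topspace X \<and> openin X (\<Union>T)"
    \<comment> \<open>distinct classes are disjoint, so taking unions commutes with intersection\<close>
    have "\<Union>(S \<inter> T) = \<Union>S \<inter> \<Union>T"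
    proof
      show "\<Union>S \<inter> \<Union>T \<subseteq> \<Union>(S \<inter> T)"
      proof
        fix z assume "z \<in> \<Union>S \<inter> \<Union>T"
        then obtain A B where AB: "z \<in> A" "A \<in> S" "z \<in> B" "B \<in> T" by auto
        then obtain a b where "a \<in> topspace X" "A = quot_class X R a"
          "b \<in> topspace X" "B = quot_class X R b"
          using S T by blast
        then have "A = B" using AB quot_class_kernel by auto
        then show "z \<in> \<Union>(S \<inter> T)" using AB by auto
      qed
    qed auto
    then show "S \<inter> T \<subseteq> quot_class X R ` topspace X \<and> openin X (\<Union>(S \<inter> T))" using S T by auto
  next
    fix K assume K: "\<forall>S\<in>K. S \<subseteq> quot_class X R ` topspace X \<and> openin X (\<Union>S)"
    have "\<Union>(\<Union>K) = \<Union>(Union ` K)" by auto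
    moreover have "openin X (\<Union>(Union ` K))" using K by (intro openin_Union) auto
    ultimately show "\<Union>K \<subseteq> quot_class X R ` topspace X \<and> openin X (\<Union>(\<Union>K))" using K by auto
  qed
  then show ?thesis
    unfolding quotient_topology_def by simp
qed

lemma topspace_quotient_topology_kernel:
  "topspace (quotient_topology X R) = quot_class X R ` topspace X"
proof -
  have "\<Union>(quot_class X R ` topspace X) = topspace X"
    using quot_class_kernel by auto
  then have "openin (quotient_topology X R) (quot_class X R ` topspace X)"
    by (simp add: openin_quotient_topology_kernel)
  moreover have "topspace (quotient_topology X R) \<subseteq> quot_class X R ` topspace X"
    by (auto simp: topspace_def openin_quotient_topology_kernel)
  ultimately show ?thesis using openin_subset by blast
qed

lemma continuous_map_quot_class: "continuous_map X (quotient_topology X R) (quot_class X R)"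
  unfolding continuous_map_def
proof (intro conjI allI impI)
  show "quot_class X R \<in> topspace X \<rightarrow> topspace (quotient_topology X R)"
    by (simp add: topspace_quotient_topology_kernel)
  fix U assume "openin (quotient_topology X R) U"
  then have U: "U \<subseteq> quot_class X R ` topspace X" "openin X (\<Union>U)"
    by (simp_all add: openin_quotient_topology_kernel)
  have "{x \<in> topspace X. quot_class X R x \<in> U} = \<Union>U"
  proof
    show "\<Union>U \<subseteq> {x \<in> topspace X. quot_class X R x \<in> U}"
    proof
      fix z assume "z \<in> \<Union>U"
      then obtain a where "a \<in> topspace X" "quot_class X R a \<in> U" "z \<in> quot_class X R a"
        using U(1) by auto
      moreover then have "quot_class X R z = quot_class X R a"
        using quot_class_kernel by auto
      ultimately show "z \<in> {x \<in> topspace X. quot_class X R x \<in> U}"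
        using quot_class_kernel by auto
    qed
  qed (use quot_class_kernel in auto)
  then show "openin X {x \<in> topspace X. quot_class X R x \<in> U}" using U by simp
qed

lemma induced_map_class: "x \<in> topspace X \<Longrightarrow> induced_map f (quot_class X R x) = f x"
proof -
  assume x: "x \<in> topspace X"
  have "(SOME y. y \<in> quot_class X R x) \<in> quot_class X R x"
    using quot_class_kernel[OF x] x by (intro someI) auto
  then show ?thesis unfolding induced_map_def using quot_class_kernel[OF x] by auto
qed

lemma continuous_induced_map:
  assumes f: "continuous_map X Y f"
  shows "continuous_map (quotient_topology X R) Y (induced_map f)"
  unfolding continuous_map_def
proof (intro conjI allI impI)
  show "induced_map f \<in> topspace (quotient_topology X R) \<rightarrow> topspace Y"
    using f by (auto simp: topspace_quotient_topology_kernel induced_map_class continuous_map_def)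
  fix V assume V: "openin Y V"
  have "\<Union>{A \<in> topspace (quotient_topology X R). induced_map f A \<in> V} = {x \<in> topspace X. f x \<in> V}"
  proof
    show "\<Union>{A \<in> topspace (quotient_topology X R). induced_map f A \<in> V} \<subseteq> {x \<in> topspace X. f x \<in> V}"
    proof
      fix z assume "z \<in> \<Union>{A \<in> topspace (quotient_topology X R). induced_map f A \<in> V}"
      then obtain a where "a \<in> topspace X" "induced_map f (quot_class X R a) \<in> V" "z \<in> quot_class X R a"
        by (auto simp: topspace_quotient_topology_kernel)
      then show "z \<in> {x \<in> topspace X. f x \<in> V}" using quot_class_kernel induced_map_class by auto
    qed
    show "{x \<in> topspace X. f x \<in> V} \<subseteq> \<Union>{A \<in> topspace (quotient_topology X R). induced_map f A \<in> V}"
    proof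
      fix x assume x: "x \<in> {x \<in> topspace X. f x \<in> V}"
      then have "x \<in> quot_class X R x" "induced_map f (quot_class X R x) \<in> V"
        using quot_class_kernel induced_map_class by auto
      then show "x \<in> \<Union>{A \<in> topspace (quotient_topology X R). induced_map f A \<in> V}"
        using x by (auto simp: topspace_quotient_topology_kernel)
    qed
  qed
  moreover have "openin X {x \<in> topspace X. f x \<in> V}" using f V by (simp add: continuous_map_def)
  ultimately show "openin (quotient_topology X R) {A \<in> topspace (quotient_topology X R). induced_map f A \<in> V}"
    unfolding openin_quotient_topology_kernel by (auto simp: topspace_quotient_topology_kernel)
qed

lemma compact_space_quotient: "compact_space X \<Longrightarrow> compact_space (quotient_topology X R)"
  using image_compactin[OF _ continuous_map_quot_class]
  by (simp add: compact_space_def topspace_quotient_topology_kernel)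

lemma quotient_homeomorphic_to_image:
  assumes cX: "compact_space X" and f: "continuous_map X Y f" and HY: "Hausdorff_space Y"
  shows "quotient_topology X R homeomorphic_space subtopology Y (f ` topspace X)"
proof -
  let ?Q = "quotient_topology X R" and ?h = "induced_map f"
  have img: "?h ` topspace ?Q = f ` topspace X"
    unfolding topspace_quotient_topology_kernel image_image
    by (rule image_cong) (simp_all add: induced_map_class)
  have "homeomorphic_map ?Q (subtopology Y (f ` topspace X)) ?h"
  proof (rule bijective_closed_imp_homeomorphic_map)
    show c: "continuous_map ?Q (subtopology Y (f ` topspace X)) ?h"
      using continuous_induced_map[OF f] img by (intro continuous_map_into_subtopology) auto
    show "closed_map ?Q (subtopology Y (f ` topspace X)) ?h"
      by (rule continuous_imp_closed_map[OF c compact_space_quotient[OF cX] Hausdorff_space_subtopology[OF HY]])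
    show "?h ` topspace ?Q = topspace (subtopology Y (f ` topspace X))"
      using img f by (auto simp: continuous_map_def)
    show "inj_on ?h (topspace ?Q)"
    proof (rule inj_onI)
      fix A B assume "A \<in> topspace ?Q" "B \<in> topspace ?Q" and e: "?h A = ?h B"
      then obtain a b where "a \<in> topspace X" "A = quot_class X R a" "b \<in> topspace X" "B = quot_class X R b"
        by (auto simp: topspace_quotient_topology_kernel)
      then show "A = B" using e quot_class_kernel induced_map_class by simp
    qed
  qed
  then show ?thesis using homeomorphic_map_imp_homeomorphic_space by blast
qed

end

lemma continuous_map_Max:
  assumes "finite A" "A \<noteq> {}" "\<And>j. j \<in> A \<Longrightarrow> continuous_map X euclideanreal (g j)"
  shows "continuous_map X euclideanreal (\<lambda>x. Max ((\<lambda>j. g j x) ` A))"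
  using assms
proof (induction A rule: finite_ne_induct)
  case (insert a A)
  then show ?case by (simp add: continuous_map_real_max)
qed simp

lemma continuous_map_Min:
  assumes "finite A" "A \<noteq> {}" "\<And>j. j \<in> A \<Longrightarrow> continuous_map X euclideanreal (g j)"
  shows "continuous_map X euclideanreal (\<lambda>x. Min ((\<lambda>j. g j x) ` A))"
  using assms
proof (induction A rule: finite_ne_induct)
  case (insert a A)
  then show ?case by (simp add: continuous_map_real_min)
qed simp

lemma Max_Min_insert:
  fixes g :: "'b \<Rightarrow> 'a::linorder"
  shows "finite A \<Longrightarrow> Max (insert c (g ` A)) = (if A = {} then c else max c (Max (g ` A)))"
    and "finite A \<Longrightarrow> Min (insert c (g ` A)) = (if A = {} then c else min c (Min (g ` A)))"
  by auto

lemma compact_space_sum_topology: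
  assumes "finite I" "\<And>i. i \<in> I \<Longrightarrow> compact_space (X i)"
  shows "compact_space (sum_topology X I)"
proof -
  have "topspace (sum_topology X I) = \<Union>((\<lambda>i. Pair i ` topspace (X i)) ` I)" by auto
  moreover have "compactin (sum_topology X I) (\<Union>((\<lambda>i. Pair i ` topspace (X i)) ` I))"
  proof (rule compactin_Union)
    fix S assume "S \<in> (\<lambda>i. Pair i ` topspace (X i)) ` I"
    then obtain i where i: "i \<in> I" "S = Pair i ` topspace (X i)" by auto
    show "compactin (sum_topology X I) S" unfolding i(2)
      by (rule image_compactin[OF _ continuous_map_component_injection[OF i(1)]])
         (use assms i in \<open>simp add: compact_space_def\<close>)
  qed (use assms in simp)
  ultimately show ?thesis by (simp add: compact_space_def)
qed

lemma continuous_map_from_sum_topology: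
  assumes "\<And>i. i \<in> I \<Longrightarrow> continuous_map (X i) Y (\<lambda>x. f (i, x))"
  shows "continuous_map (sum_topology X I) Y f"
  unfolding continuous_map_def
proof (intro conjI allI impI)
  show "f \<in> topspace (sum_topology X I) \<rightarrow> topspace Y"
    using assms by (force simp: continuous_map_def Pi_iff)
  fix U assume U: "openin Y U"
  show "openin (sum_topology X I) {x \<in> topspace (sum_topology X I). f x \<in> U}"
    unfolding openin_sum_topology
  proof (intro conjI ballI)
    fix i assume i: "i \<in> I"
    have "{x. (i, x) \<in> {x \<in> topspace (sum_topology X I). f x \<in> U}} = {x \<in> topspace (X i). f (i, x) \<in> U}"
      using i by auto
    then show "openin (X i) {x. (i, x) \<in> {x \<in> topspace (sum_topology X I). f x \<in> U}}"
      using assms[OF i] U by (simp add: continuous_map_def)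
  qed auto
qed

lemma Hausdorff_powertop_real: "Hausdorff_space (powertop_real UNIV)"
  by (simp add: Hausdorff_space_product_topology)

lemma compactin_powertop_real_box:
  assumes "closedin (powertop_real UNIV) S" "S \<subseteq> PiE UNIV (\<lambda>i. {a i..b i})"
  shows "compactin (powertop_real UNIV) S"
  using closed_compactin[OF _ assms(2) assms(1)] by (simp add: compactin_PiE)

lemma nsphere_mem: "x \<in> topspace (nsphere k) \<longleftrightarrow> (\<Sum>i\<le>k. x i ^ 2) = 1 \<and> (\<forall>i>k. x i = 0)"
  by (simp add: nsphere)

lemma compact_space_nsphere: "compact_space (nsphere k)"
proof -
  define S where "S = {x::nat\<Rightarrow>real. (\<Sum>i\<le>k. x i ^ 2) = 1 \<and> (\<forall>i>k. x i = 0)}"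
  have "S \<subseteq> PiE UNIV (\<lambda>i. {-1..1})"
  proof
    fix x assume x: "x \<in> S"
    have "\<bar>x i\<bar> \<le> 1" for i
    proof (cases "i \<le> k")
      case True
      have "x i ^ 2 \<le> (\<Sum>i\<le>k. x i ^ 2)"
        using True by (intro member_le_sum) auto
      then show ?thesis using x by (simp add: S_def abs_square_le_1)
    qed (use x S_def in simp)
    then show "x \<in> PiE UNIV (\<lambda>i. {-1..1})" by (auto simp: abs_le_iff)
  qed
  moreover have "closedin (powertop_real UNIV) S"
  proof -
    have "S = {x \<in> topspace (powertop_real UNIV). (\<Sum>i\<le>k. x i ^ 2) \<in> {1}} \<inter>
              (\<Inter>i\<in>{i. i>k}. {x \<in> topspace (powertop_real UNIV). x i \<in> {0}})"
      unfolding S_def by auto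
    also have "closedin (powertop_real UNIV) \<dots>"
      by (intro closedin_Int closedin_INT closedin_continuous_map_preimage[where Y=euclideanreal])
         (auto intro!: continuous_intros)
    finally show ?thesis .
  qed
  ultimately have "compactin (powertop_real UNIV) S"
    by (intro compactin_powertop_real_box) auto
  then show ?thesis unfolding nsphere S_def[symmetric] by (rule compact_space_subtopology)
qed

lemma topspace_cube:
  "topspace (cube k d) = {t. (\<forall>i\<ge>k. t i = 0) \<and> (\<forall>i<k. 0 \<le> t i \<and> t i \<le> real (d i))}"
  by (auto simp: cube_def topspace_Euclidean_space)

lemma compact_space_cube: "compact_space (cube k d)"
proof -
  define B where "B = (\<lambda>i. if i < k then {0..real (d i)} else {0::real})"
  have e: "cube k d = subtopology (powertop_real UNIV) (PiE UNIV B)"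
  proof -
    have "{x. \<forall>i\<ge>k. x i = 0} \<inter> {t. \<forall>i<k. 0 \<le> t i \<and> t i \<le> real (d i)} = PiE UNIV B"
      by (auto simp: B_def PiE_UNIV_domain Pi_iff not_le split: if_splits)
    then show ?thesis by (simp add: cube_def Euclidean_space_def subtopology_subtopology)
  qed
  have "compactin (powertop_real UNIV) (PiE UNIV B)"
    by (simp add: compactin_PiE B_def)
  then show ?thesis unfolding e by (rule compact_space_subtopology)
qed

lemma continuous_cube_proj: "continuous_map (cube k d) euclideanreal (\<lambda>t. t j)"
  unfolding cube_def Euclidean_space_def
  by (intro continuous_map_from_subtopology continuous_map_product_projection) auto

section \<open>A concrete model of the wedge of spheres\<close>

definition spread :: "nat \<Rightarrow> (nat \<Rightarrow> real) \<Rightarrow> real" where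
  "spread k x = Max (insert 0 (x ` {2..k})) - Min (insert 0 (x ` {2..k}))"

definition gauge :: "nat \<Rightarrow> (nat \<Rightarrow> real) \<Rightarrow> real" where
  "gauge k x = \<bar>x 0\<bar> + \<bar>x 1\<bar> + spread k x"

text \<open>The colour \<open>i\<close> is recorded in coordinate \<open>k + 1\<close>, weighted so that it disappears
  exactly where \<open>z\<^sub>0 = 1\<close>, i.e. at the base point.\<close>

definition with_colour :: "nat \<Rightarrow> nat \<Rightarrow> (nat \<Rightarrow> real) \<Rightarrow> (nat \<Rightarrow> real)" where
  "with_colour k i z = z(Suc k := real i * (1 - z 0))"

definition wedge_map :: "nat \<Rightarrow> nat \<times> (nat \<Rightarrow> real) \<Rightarrow> (nat \<Rightarrow> real)" where
  "wedge_map k p = with_colour k (fst p) (\<lambda>j. snd p j / gauge k (snd p))"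

lemma with_colour_base: "z 0 = 1 \<Longrightarrow> with_colour k i z = with_colour k i' z"
  by (simp add: with_colour_def)

lemma spread_bounds:
  fixes x :: "nat \<Rightarrow> real"
  shows "j \<in> {2..k} \<Longrightarrow> x j \<le> Max (insert 0 (x ` {2..k}))"
    and "j \<in> {2..k} \<Longrightarrow> Min (insert 0 (x ` {2..k})) \<le> x j"
    and "0 \<le> Max (insert 0 (x ` {2..k}))"
    and "Min (insert 0 (x ` {2..k})) \<le> 0"
  by (intro Max_ge Min_le; simp)+

lemma spread_nonneg: "0 \<le> spread k x"
  unfolding spread_def using spread_bounds(3,4)[of x k] by linarith

lemma spread_zero_imp:
  assumes "spread k x = 0" "j \<in> {2..k}"
  shows "x j = 0"
  using assms(1) spread_bounds(1,2)[where x=x, OF assms(2)] spread_bounds(3,4)[where x=x and k=k]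
  unfolding spread_def by linarith

lemma spread_scale:
  assumes c: "0 < c"
  shows "spread k (\<lambda>j. y j / c) = spread k y / c"
proof -
  have e: "insert 0 ((\<lambda>j. y j / c) ` {2..k}) = (\<lambda>z. z / c) ` insert 0 (y ` {2..k})"
    by (simp add: image_image)
  have m: "mono (\<lambda>z::real. z / c)" using c by (auto simp: mono_def divide_right_mono)
  have "Max ((\<lambda>z. z / c) ` insert 0 (y ` {2..k})) = Max (insert 0 (y ` {2..k})) / c"
    by (rule mono_Max_commute[OF m, symmetric]) auto
  moreover have "Min ((\<lambda>z. z / c) ` insert 0 (y ` {2..k})) = Min (insert 0 (y ` {2..k})) / c"
    by (rule mono_Min_commute[OF m, symmetric]) auto
  ultimately show ?thesis unfolding spread_def e by (simp add: diff_divide_distrib)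
qed

lemma gauge_scale: "0 < c \<Longrightarrow> gauge k (\<lambda>j. y j / c) = gauge k y / c"
  by (simp add: gauge_def spread_scale add_divide_distrib)

lemma gauge_pos:
  assumes "x \<in> topspace (nsphere k)"
  shows "0 < gauge k x"
proof (rule ccontr)
  assume "\<not> 0 < gauge k x"
  then have z: "x 0 = 0" "x 1 = 0" "spread k x = 0"
    using spread_nonneg[of k x] by (auto simp: gauge_def)
  have "x j = 0" for j
  proof -
    have "j = 0 \<or> j = 1 \<or> j \<in> {2..k} \<or> j > k" by auto
    then show ?thesis using z spread_zero_imp[OF z(3)] assms by (auto simp: nsphere_mem)
  qed
  then show False using assms by (simp add: nsphere_mem)
qed

lemma gauge_base: "gauge k sphere_base = 1"
proof -
  have e: "insert 0 (sphere_base ` {2..k}) = {0}" by (auto simp: sphere_base_def)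
  have "spread k sphere_base = 0" unfolding spread_def e by simp
  then show ?thesis by (simp add: gauge_def sphere_base_def)
qed

lemma wedge_map_base: "wedge_map k (i, sphere_base) = sphere_base"
  unfolding wedge_map_def with_colour_def using gauge_base[of k]
  by (auto simp: sphere_base_def fun_eq_iff)

lemma normalised_first_coord_one:
  assumes x: "x \<in> topspace (nsphere k)" and e: "x 0 / gauge k x = 1"
  shows "x = sphere_base"
proof -
  have "x 0 = gauge k x" using e gauge_pos[OF x] by (simp add: field_simps)
  then have z: "x 1 = 0" "spread k x = 0" "x 0 \<ge> 0"
    using spread_nonneg[of k x] by (auto simp: gauge_def)
  have xj: "x j = 0" if "j \<noteq> 0" for j
  proof -
    have "j = 1 \<or> j \<in> {2..k} \<or> j > k" using that by auto
    then show ?thesis using z spread_zero_imp[OF z(2)] x by (auto simp: nsphere_mem)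
  qed
  have "(\<Sum>i\<le>k. x i ^ 2) = (\<Sum>i\<in>{0}. x i ^ 2)"
    using xj by (intro sum.mono_neutral_right) auto
  then have "x 0 ^ 2 = 1" using x by (simp add: nsphere_mem)
  then have "x 0 = 1" using z(3) by (simp add: power2_eq_1_iff)
  then show ?thesis using xj by (auto simp: sphere_base_def)
qed

lemma wedge_map_inj:
  assumes x: "x \<in> topspace (nsphere k)" and y: "y \<in> topspace (nsphere k)"
    and e: "wedge_map k (i, x) = wedge_map k (j, y)"
  shows "(i = j \<and> x = y) \<or> (x = sphere_base \<and> y = sphere_base)"
proof -
  have rx: "0 < gauge k x" and ry: "0 < gauge k y" using gauge_pos x y by auto
  have c: "x m / gauge k x = y m / gauge k y" for m
  proof (cases "m = Suc k")
    case True then show ?thesis using x y by (simp add: nsphere_mem)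
  next
    case False
    then show ?thesis using fun_cong[OF e, of m] by (simp add: wedge_map_def with_colour_def)
  qed
  \<comment> \<open>\<open>x\<close> and \<open>y\<close> are positively proportional unit vectors, hence equal\<close>
  define a where "a = gauge k x / gauge k y"
  have xa: "x m = a * y m" for m using c[of m] rx ry by (simp add: a_def field_simps)
  have "(\<Sum>i\<le>k. x i ^ 2) = a^2 * (\<Sum>i\<le>k. y i ^ 2)"
    by (simp add: xa power_mult_distrib sum_distrib_left)
  then have "a^2 = 1" using x y by (simp add: nsphere_mem)
  moreover have "a > 0" using rx ry by (simp add: a_def)
  ultimately have "a = 1" by (simp add: power2_eq_1_iff)
  then have xy: "x = y" using xa by auto
  have "real i * (1 - x 0 / gauge k x) = real j * (1 - y 0 / gauge k y)"
    using fun_cong[OF e, of "Suc k"] by (simp add: wedge_map_def with_colour_def)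
  then have "i = j \<or> x 0 / gauge k x = 1" using xy by auto
  then show ?thesis using xy normalised_first_coord_one[OF x] by auto
qed

lemma wedge_rel_iff:
  assumes "p \<in> topspace (sum_topology (\<lambda>i. nsphere k) {..<n})"
    and "q \<in> topspace (sum_topology (\<lambda>i. nsphere k) {..<n})"
  shows "wedge_rel p q \<longleftrightarrow> wedge_map k p = wedge_map k q"
proof
  assume "wedge_rel p q"
  then show "wedge_map k p = wedge_map k q"
    unfolding wedge_rel_def by (metis wedge_map_base prod.collapse)
next
  assume "wedge_map k p = wedge_map k q"
  then show "wedge_rel p q" using assms wedge_map_inj[of "snd p" k "snd q" "fst p" "fst q"]
    by (auto simp: wedge_rel_def prod_eq_iff)
qed

lemma continuous_gauge: "continuous_map (nsphere k) euclideanreal (gauge k)"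
proof -
  note proj = continuous_map_nsphere_projection
  have "continuous_map (nsphere k) euclideanreal (\<lambda>x. spread k x)"
    unfolding spread_def Max_Min_insert[OF finite_atLeastAtMost]
    by (intro continuous_intros continuous_map_real_max continuous_map_real_min
        continuous_map_Max[where g="\<lambda>j x. x j"] continuous_map_Min[where g="\<lambda>j x. x j"] proj) auto
  then show ?thesis
    unfolding gauge_def by (intro continuous_intros proj)
qed

lemma continuous_wedge_map:
  "continuous_map (sum_topology (\<lambda>i. nsphere k) {..<n}) (powertop_real UNIV) (wedge_map k)"
proof (rule continuous_map_from_sum_topology)
  fix i
  have d: "continuous_map (nsphere k) euclideanreal (\<lambda>x. x m / gauge k x)" for m
    by (intro continuous_map_real_divide continuous_gauge continuous_map_nsphere_projection)
       (auto dest!: gauge_pos)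
  show "continuous_map (nsphere k) (powertop_real UNIV) (\<lambda>x. wedge_map k (i, x))"
    unfolding continuous_map_componentwise_UNIV
  proof
    fix m
    show "continuous_map (nsphere k) euclideanreal (\<lambda>x. wedge_map k (i, x) m)"
      unfolding wedge_map_def with_colour_def
      by (cases "m = Suc k") (simp_all add: d continuous_intros)
  qed
qed

theorem sphere_wedge_homeomorphic_image:
  "sphere_wedge n k homeomorphic_space
     subtopology (powertop_real UNIV) (wedge_map k ` topspace (sum_topology (\<lambda>i. nsphere k) {..<n}))"
  unfolding sphere_wedge_def
  by (rule quotient_homeomorphic_to_image[OF wedge_rel_iff compact_space_sum_topology
        continuous_wedge_map Hausdorff_powertop_real])
     (auto simp: compact_space_nsphere simp del: topspace_sum_topology)

text \<open>Conversely, every vector of gauge \<open>1\<close> (supported on \<open>0..k\<close>) with colour \<open>i\<close> is the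
  image of a point of the \<open>i\<close>-th sphere: normalise it to Euclidean length one.\<close>

lemma gauge_sphere_in_wedge_image:
  assumes r: "gauge k S = 1" and b: "\<And>j. k < j \<Longrightarrow> S j = 0"
  shows "\<exists>x \<in> topspace (nsphere k). wedge_map k (i, x) = with_colour k i S"
proof -
  define N where "N = sqrt (\<Sum>j\<le>k. S j ^ 2)"
  have N0: "0 < N"
  proof (rule ccontr)
    assume "\<not> 0 < N"
    then have "(\<Sum>j\<le>k. S j ^ 2) = 0" unfolding N_def
      by (metis le_less real_sqrt_gt_zero sum_nonneg zero_le_power2 real_sqrt_eq_zero_cancel_iff)
    then have "S j = 0" if "j \<le> k" for j
      using that by (subst (asm) sum_nonneg_eq_0_iff) auto
    then have e: "insert 0 (S ` {2..k}) = {0}" and "S 0 = 0" "S 1 = 0"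
      using b[of 1] by (auto simp: not_le, cases k, auto)
    moreover have "spread k S = 0" unfolding spread_def e by simp
    ultimately have "gauge k S = 0" by (simp add: gauge_def)
    then show False using r by simp
  qed
  define x where "x = (\<lambda>j. S j / N)"
  have "(\<Sum>j\<le>k. x j ^ 2) = (\<Sum>j\<le>k. S j ^ 2) / N ^ 2"
    by (simp add: x_def power_divide sum_divide_distrib)
  also have "\<dots> = 1" using N0 unfolding N_def by (simp add: sum_nonneg)
  finally have xs: "x \<in> topspace (nsphere k)" using b by (simp add: nsphere_mem x_def)
  have "gauge k x = 1 / N" using gauge_scale[OF N0, of k S] r by (simp add: x_def)
  then have "(\<lambda>j. x j / gauge k x) = S" using N0 by (simp add: x_def fun_eq_iff)
  then show ?thesis using xs by (auto simp: wedge_map_def)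
qed

section \<open>\<open>k\<close>-graphs from graded posets\<close>

definition is_seg :: "'c kgraph \<Rightarrow> 'c \<Rightarrow> (nat \<Rightarrow> nat) \<Rightarrow> (nat \<Rightarrow> nat) \<Rightarrow> 'c \<Rightarrow> bool" where
  "is_seg K l m n \<beta> \<longleftrightarrow> \<beta> \<in> Mor K \<and> deg K \<beta> = (\<lambda>i. n i - m i) \<and>
      (\<exists>\<alpha>\<in>Mor K. \<exists>\<gamma>\<in>Mor K. deg K \<alpha> = m \<and> src K \<alpha> = rng K \<beta> \<and> src K \<beta> = rng K \<gamma> \<and>
          l = comp K (comp K \<alpha> \<beta>) \<gamma>)"

lemma seg_unique:
  assumes "\<And>\<beta>. is_seg K l m n \<beta> \<longleftrightarrow> \<beta> = b"
  shows "seg K l m n = b"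
  using assms unfolding seg_def is_seg_def[symmetric] by simp

text \<open>It is a \<open>k\<close>-graph as soon as
  every interval \<open>[p, r]\<close> contains exactly one element of each intermediate grade.\<close>

definition graded_poset_kgraph ::
    "'v set \<Rightarrow> ('v \<Rightarrow> 'v \<Rightarrow> bool) \<Rightarrow> ('v \<Rightarrow> nat \<Rightarrow> nat) \<Rightarrow> ('v \<times> 'v) kgraph" where
  "graded_poset_kgraph V le g =
     \<lparr>Mor = {\<mu>. fst \<mu> \<in> V \<and> snd \<mu> \<in> V \<and> le (fst \<mu>) (snd \<mu>)},
      src = (\<lambda>\<mu>. (snd \<mu>, snd \<mu>)), rng = (\<lambda>\<mu>. (fst \<mu>, fst \<mu>)),
      comp = (\<lambda>\<mu> \<nu>. (fst \<mu>, snd \<nu>)), deg = (\<lambda>\<mu> j. g (snd \<mu>) j - g (fst \<mu>) j)\<rparr>"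

definition interpolant ::
    "'v set \<Rightarrow> ('v \<Rightarrow> 'v \<Rightarrow> bool) \<Rightarrow> ('v \<Rightarrow> nat \<Rightarrow> nat) \<Rightarrow> 'v \<Rightarrow> 'v \<Rightarrow> (nat \<Rightarrow> nat) \<Rightarrow> 'v" where
  "interpolant V le g p r c = (THE q. q \<in> V \<and> le p q \<and> le q r \<and> g q = c)"

text \<open>Recovering a grade from a degree: truncated subtraction is exact above the lower grade.\<close>

lemma grade_from_deg:
  fixes x y a :: "nat \<Rightarrow> nat"
  assumes "(\<lambda>j. y j - x j) = a" "x \<le> y"
  shows "y = (\<lambda>j. x j + a j)"
proof
  fix j
  have "y j - x j = a j" "x j \<le> y j" using fun_cong[OF assms(1), of j] assms(2) by (auto simp: le_fun_def)
  then show "y j = x j + a j" by simp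
qed

context
  fixes V :: "'v set" and le :: "'v \<Rightarrow> 'v \<Rightarrow> bool" and g :: "'v \<Rightarrow> nat \<Rightarrow> nat" and k :: nat
  assumes countable_V: "countable V"
    and le_refl: "\<And>p. p \<in> V \<Longrightarrow> le p p"
    and le_trans: "\<And>p q r. p \<in> V \<Longrightarrow> q \<in> V \<Longrightarrow> r \<in> V \<Longrightarrow> le p q \<Longrightarrow> le q r \<Longrightarrow> le p r"
    and grade_mono: "\<And>p q. p \<in> V \<Longrightarrow> q \<in> V \<Longrightarrow> le p q \<Longrightarrow> g p \<le> g q"
    and grade_Nk: "\<And>p. p \<in> V \<Longrightarrow> in_Nk k (g p)"
    and interpolation: "\<And>p r c. p \<in> V \<Longrightarrow> r \<in> V \<Longrightarrow> le p r \<Longrightarrow> g p \<le> c \<Longrightarrow> c \<le> g r \<Longrightarrow>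
                          \<exists>!q. q \<in> V \<and> le p q \<and> le q r \<and> g q = c"
begin

abbreviation (input) "G \<equiv> graded_poset_kgraph V le g"

lemma graded_poset_kgraph_simps:
  "\<mu> \<in> Mor G \<longleftrightarrow> fst \<mu> \<in> V \<and> snd \<mu> \<in> V \<and> le (fst \<mu>) (snd \<mu>)"
  "src G \<mu> = (snd \<mu>, snd \<mu>)" "rng G \<mu> = (fst \<mu>, fst \<mu>)" "comp G \<mu> \<nu> = (fst \<mu>, snd \<nu>)"
  "deg G \<mu> = (\<lambda>j. g (snd \<mu>) j - g (fst \<mu>) j)"
  by (simp_all add: graded_poset_kgraph_def)

lemma interpolant:
  assumes "p \<in> V" "r \<in> V" "le p r" "g p \<le> c" "c \<le> g r"
  shows "interpolant V le g p r c \<in> V" "le p (interpolant V le g p r c)"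
    "le (interpolant V le g p r c) r" "g (interpolant V le g p r c) = c"
  using theI'[OF interpolation[OF assms]] unfolding interpolant_def by auto

lemma interpolant_unique:
  assumes "p \<in> V" "q \<in> V" "r \<in> V" "le p q" "le q r"
  shows "interpolant V le g p r (g q) = q"
proof -
  have pr: "le p r" using le_trans assms by blast
  have "g p \<le> g q" "g q \<le> g r" using grade_mono assms by blast+
  then show ?thesis unfolding interpolant_def
    by (rule the1_equality[OF interpolation[OF assms(1,3) pr]]) (simp add: assms)
qed

lemma small_category_graded_poset: "small_category G"
proof -
  have "Mor G \<subseteq> V \<times> V" by (auto simp: graded_poset_kgraph_simps)
  moreover have "countable (V \<times> V)" using countable_V by simp
  ultimately have "countable (Mor G)" by (rule countable_subset)
  moreover have "\<forall>\<mu>\<in>Mor G. \<forall>\<nu>\<in>Mor G. snd \<mu> = fst \<nu> \<longrightarrow> le (fst \<mu>) (snd \<nu>)"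
  proof (intro ballI impI)
    fix \<mu> \<nu> assume "\<mu> \<in> Mor G" "\<nu> \<in> Mor G" "snd \<mu> = fst \<nu>"
    then show "le (fst \<mu>) (snd \<nu>)"
      using le_trans[of "fst \<mu>" "snd \<mu>" "snd \<nu>"] by (simp add: graded_poset_kgraph_simps)
  qed
  ultimately show ?thesis
    unfolding small_category_def by (simp add: graded_poset_kgraph_simps le_refl)
qed

text \<open>Unique factorisation: a factorisation of \<open>(p, r)\<close> into degrees \<open>m\<close> and \<open>n\<close> must pass
  through the interpolant of grade \<open>g p + m\<close>.\<close>

lemma graded_poset_factorisation:
  assumes l: "l \<in> Mor G" and d: "deg G l = (\<lambda>i. m i + n i)"
  shows "\<exists>!pq. fst pq \<in> Mor G \<and> snd pq \<in> Mor G \<and> src G (fst pq) = rng G (snd pq) \<and>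
              deg G (fst pq) = m \<and> deg G (snd pq) = n \<and> l = comp G (fst pq) (snd pq)"
proof -
  obtain p r where lpr: "l = (p, r)" and p: "p \<in> V" and r: "r \<in> V" and pr: "le p r"
    using l by (cases l) (auto simp: graded_poset_kgraph_simps)
  have ple: "g p \<le> g r" using grade_mono[OF p r pr] .
  have gr: "g r j = g p j + m j + n j" for j
    using fun_cong[OF d, of j] ple unfolding lpr graded_poset_kgraph_simps le_fun_def
    by (simp, metis add.assoc le_add_diff_inverse)
  define q where "q = interpolant V le g p r (\<lambda>j. g p j + m j)"
  have c1: "g p \<le> (\<lambda>j. g p j + m j)" and c2: "(\<lambda>j. g p j + m j) \<le> g r"
    by (simp_all add: le_fun_def gr)
  note qprops = interpolant[OF p r pr c1 c2, folded q_def]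
  show ?thesis
  proof (rule ex1I[of _ "((p, q), (q, r))"])
    show "fst ((p, q), (q, r)) \<in> Mor G \<and> snd ((p, q), (q, r)) \<in> Mor G \<and>
        src G (fst ((p, q), (q, r))) = rng G (snd ((p, q), (q, r))) \<and>
        deg G (fst ((p, q), (q, r))) = m \<and> deg G (snd ((p, q), (q, r))) = n \<and>
        l = comp G (fst ((p, q), (q, r))) (snd ((p, q), (q, r)))"
      using qprops p r lpr by (simp add: graded_poset_kgraph_simps fun_eq_iff gr)
  next
    fix pq
    assume h: "fst pq \<in> Mor G \<and> snd pq \<in> Mor G \<and> src G (fst pq) = rng G (snd pq) \<and>
              deg G (fst pq) = m \<and> deg G (snd pq) = n \<and> l = comp G (fst pq) (snd pq)"
    then obtain b where pq: "pq = ((p, b), (b, r))" and b: "b \<in> V" "le p b" "le b r"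
      and db: "(\<lambda>j. g b j - g p j) = m"
      using lpr by (cases pq) (auto simp: graded_poset_kgraph_simps)
    have "g b = (\<lambda>j. g p j + m j)" by (rule grade_from_deg[OF db grade_mono[OF p b(1,2)]])
    then have "b = q" using interpolant_unique[OF p b(1) r b(2,3)] by (simp add: q_def)
    then show "pq = ((p, q), (q, r))" using pq by simp
  qed
qed

theorem is_kgraph_graded_poset: "is_kgraph k G"
  unfolding is_kgraph_def
proof (intro conjI)
  show "small_category G" by (rule small_category_graded_poset)
  show "\<forall>\<mu>\<in>Mor G. in_Nk k (deg G \<mu>)"
    using grade_Nk by (auto simp: graded_poset_kgraph_simps in_Nk_def)
  show "\<forall>\<mu>\<in>Mor G. deg G (src G \<mu>) = (\<lambda>i. 0) \<and> deg G (rng G \<mu>) = (\<lambda>i. 0)"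
    by (simp add: graded_poset_kgraph_simps)
  show "\<forall>\<mu>\<in>Mor G. \<forall>\<nu>\<in>Mor G. src G \<mu> = rng G \<nu> \<longrightarrow>
          deg G (comp G \<mu> \<nu>) = (\<lambda>i. deg G \<mu> i + deg G \<nu> i)"
  proof (intro ballI impI ext)
    fix \<mu> \<nu> j assume "\<mu> \<in> Mor G" "\<nu> \<in> Mor G" "src G \<mu> = rng G \<nu>"
    then have "g (fst \<mu>) j \<le> g (snd \<mu>) j" "g (fst \<nu>) j \<le> g (snd \<nu>) j" "snd \<mu> = fst \<nu>"
      using grade_mono[of "fst \<mu>" "snd \<mu>"] grade_mono[of "fst \<nu>" "snd \<nu>"]
      by (auto simp: graded_poset_kgraph_simps le_fun_def)
    then show "deg G (comp G \<mu> \<nu>) j = deg G \<mu> j + deg G \<nu> j"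
      by (simp add: graded_poset_kgraph_simps)
  qed
  show "\<forall>l\<in>Mor G. \<forall>m n. in_Nk k m \<longrightarrow> in_Nk k n \<longrightarrow> deg G l = (\<lambda>i. m i + n i) \<longrightarrow>
          (\<exists>!pq. fst pq \<in> Mor G \<and> snd pq \<in> Mor G \<and> src G (fst pq) = rng G (snd pq) \<and>
                 deg G (fst pq) = m \<and> deg G (snd pq) = n \<and> l = comp G (fst pq) (snd pq))"
    by (intro ballI allI impI graded_poset_factorisation)
qed

text \<open>Interpolants are monotone in the grade: the interpolant of grade \<open>c\<close> in \<open>[p, q']\<close>, where
  \<open>q'\<close> is the interpolant of grade \<open>c' \<ge> c\<close>, also lies in \<open>[p, r]\<close>.\<close>

lemma interpolant_mono:
  assumes p: "p \<in> V" and r: "r \<in> V" and pr: "le p r"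
    and c: "g p \<le> c" "c \<le> c'" "c' \<le> g r"
  shows "le (interpolant V le g p r c) (interpolant V le g p r c')"
proof -
  note B = interpolant[OF p r pr order_trans[OF c(1,2)] c(3)]
  have "c \<le> g (interpolant V le g p r c')" using c(2) B(4) by simp
  then obtain q where q: "q \<in> V" "le p q" "le q (interpolant V le g p r c')" "g q = c"
    using interpolation[OF p B(1,2) c(1)] by blast
  have "le q r" using le_trans[OF q(1) B(1) r q(3) B(3)] .
  then have "interpolant V le g p r c = q" using interpolant_unique[OF p q(1) r q(2)] q(4) by simp
  then show ?thesis using q(3) by simp
qed

lemma is_seg_graded_poset:
  assumes l: "(p, r) \<in> Mor G" and ab: "a \<le> b" and br: "(\<lambda>j. g p j + b j) \<le> g r"
  shows "is_seg G (p, r) a b \<beta> \<longleftrightarrow>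
           \<beta> = (interpolant V le g p r (\<lambda>j. g p j + a j), interpolant V le g p r (\<lambda>j. g p j + b j))"
proof -
  have p: "p \<in> V" and r: "r \<in> V" and pr: "le p r"
    using l by (auto simp: graded_poset_kgraph_simps)
  define qa where "qa = interpolant V le g p r (\<lambda>j. g p j + a j)"
  define qb where "qb = interpolant V le g p r (\<lambda>j. g p j + b j)"
  have ab': "(\<lambda>j. g p j + a j) \<le> (\<lambda>j. g p j + b j)" using ab by (simp add: le_fun_def)
  have ca: "g p \<le> (\<lambda>j. g p j + a j)" "(\<lambda>j. g p j + a j) \<le> g r"
    using order_trans[OF ab' br] by (simp_all add: le_fun_def)
  have cb: "g p \<le> (\<lambda>j. g p j + b j)" by (simp add: le_fun_def)
  note A = interpolant[OF p r pr ca, folded qa_def] and B = interpolant[OF p r pr cb br, folded qb_def]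
  have "le qa qb" unfolding qa_def qb_def by (rule interpolant_mono[OF p r pr ca(1) ab' br])
  have "is_seg G (p, r) a b \<beta> \<longleftrightarrow> \<beta> = (qa, qb)"
    unfolding is_seg_def
  proof
    have m: "(qa, qb) \<in> Mor G" "(p, qa) \<in> Mor G" "(qb, r) \<in> Mor G"
      using A B p r \<open>le qa qb\<close> by (simp_all add: graded_poset_kgraph_simps)
    have d: "deg G (qa, qb) = (\<lambda>i. b i - a i)" "deg G (p, qa) = a"
      using A(4) B(4) by (simp_all add: graded_poset_kgraph_simps)
    assume "\<beta> = (qa, qb)"
    then show "\<beta> \<in> Mor G \<and> deg G \<beta> = (\<lambda>i. b i - a i) \<and>
      (\<exists>\<alpha>\<in>Mor G. \<exists>\<gamma>\<in>Mor G. deg G \<alpha> = a \<and> src G \<alpha> = rng G \<beta> \<and>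
         src G \<beta> = rng G \<gamma> \<and> (p, r) = comp G (comp G \<alpha> \<beta>) \<gamma>)"
      using m d by (intro conjI bexI[OF _ m(2)] bexI[OF _ m(3)]) (simp_all add: graded_poset_kgraph_simps)
  next
    assume "\<beta> \<in> Mor G \<and> deg G \<beta> = (\<lambda>i. b i - a i) \<and>
      (\<exists>\<alpha>\<in>Mor G. \<exists>\<gamma>\<in>Mor G. deg G \<alpha> = a \<and> src G \<alpha> = rng G \<beta> \<and>
         src G \<beta> = rng G \<gamma> \<and> (p, r) = comp G (comp G \<alpha> \<beta>) \<gamma>)"
    then obtain u v where \<beta>: "\<beta> = (u, v)" and uv: "u \<in> V" "v \<in> V" "le p u" "le u v" "le v r"
      and du: "(\<lambda>j. g u j - g p j) = a" and dv: "(\<lambda>j. g v j - g u j) = (\<lambda>i. b i - a i)"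
      by (cases \<beta>) (auto simp: graded_poset_kgraph_simps)
    have gu: "g u = (\<lambda>j. g p j + a j)" by (rule grade_from_deg[OF du grade_mono[OF p uv(1,3)]])
    have "g v = (\<lambda>j. g u j + (b j - a j))" by (rule grade_from_deg[OF dv grade_mono[OF uv(1,2,4)]])
    then have "g v = (\<lambda>j. g p j + b j)" using gu ab by (auto simp: le_fun_def)
    moreover have "le u r" "le p v" using le_trans uv p r by blast+
    ultimately show "\<beta> = (qa, qb)"
      using interpolant_unique[OF p uv(1) r uv(3)] interpolant_unique[OF p uv(2) r _ uv(5)] gu \<beta>
      by (simp add: qa_def qb_def)
  qed
  then show ?thesis by (simp add: qa_def qb_def)
qed

end

text \<open>The statement asks for a \<open>k\<close>-graph with morphisms in \<open>nat\<close>; any \<open>k\<close>-graph with countably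
  many morphisms can be relabelled injectively, preserving all the structure.\<close>

definition relabel :: "('b \<Rightarrow> 'c) \<Rightarrow> 'b kgraph \<Rightarrow> 'c kgraph" where
  "relabel f L = \<lparr>Mor = f ` Mor L,
     src = (\<lambda>\<mu>. f (src L (inv_into (Mor L) f \<mu>))),
     rng = (\<lambda>\<mu>. f (rng L (inv_into (Mor L) f \<mu>))),
     comp = (\<lambda>\<mu> \<nu>. f (comp L (inv_into (Mor L) f \<mu>) (inv_into (Mor L) f \<nu>))),
     deg = (\<lambda>\<mu>. deg L (inv_into (Mor L) f \<mu>))\<rparr>"

context
  fixes f :: "'b \<Rightarrow> 'c" and L :: "'b kgraph"
  assumes inj: "inj_on f (Mor L)" and sc: "small_category L"
begin

lemma relabel_eq_iff[simp]: "x \<in> Mor L \<Longrightarrow> y \<in> Mor L \<Longrightarrow> f x = f y \<longleftrightarrow> x = y"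
  using inj by (meson inj_on_eq_iff)

lemma relabel_simps[simp]:
  "Mor (relabel f L) = f ` Mor L"
  "x \<in> Mor L \<Longrightarrow> src (relabel f L) (f x) = f (src L x)"
  "x \<in> Mor L \<Longrightarrow> rng (relabel f L) (f x) = f (rng L x)"
  "x \<in> Mor L \<Longrightarrow> y \<in> Mor L \<Longrightarrow> comp (relabel f L) (f x) (f y) = f (comp L x y)"
  "x \<in> Mor L \<Longrightarrow> deg (relabel f L) (f x) = deg L x"
  using inj by (simp_all add: relabel_def inv_into_f_f)

lemma cat_laws:
  "\<mu> \<in> Mor L \<Longrightarrow> src L \<mu> \<in> Mor L \<and> rng L \<mu> \<in> Mor L"
  "\<mu> \<in> Mor L \<Longrightarrow> src L (src L \<mu>) = src L \<mu> \<and> rng L (src L \<mu>) = src L \<mu> \<and>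
                 src L (rng L \<mu>) = rng L \<mu> \<and> rng L (rng L \<mu>) = rng L \<mu>"
  "\<mu> \<in> Mor L \<Longrightarrow> comp L \<mu> (src L \<mu>) = \<mu> \<and> comp L (rng L \<mu>) \<mu> = \<mu>"
  "\<mu> \<in> Mor L \<Longrightarrow> \<nu> \<in> Mor L \<Longrightarrow> src L \<mu> = rng L \<nu> \<Longrightarrow>
        comp L \<mu> \<nu> \<in> Mor L \<and> src L (comp L \<mu> \<nu>) = src L \<nu> \<and> rng L (comp L \<mu> \<nu>) = rng L \<mu>"
  "\<mu> \<in> Mor L \<Longrightarrow> \<nu> \<in> Mor L \<Longrightarrow> \<rho> \<in> Mor L \<Longrightarrow> src L \<mu> = rng L \<nu> \<Longrightarrow> src L \<nu> = rng L \<rho> \<Longrightarrow>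
        comp L (comp L \<mu> \<nu>) \<rho> = comp L \<mu> (comp L \<nu> \<rho>)"
  using sc unfolding small_category_def by blast+

lemma relabel_composable:
  assumes "x \<in> Mor L" "y \<in> Mor L" "src (relabel f L) (f x) = rng (relabel f L) (f y)"
  shows "src L x = rng L y"
proof -
  have "src L x \<in> Mor L" "rng L y \<in> Mor L" using cat_laws(1) assms(1,2) by blast+
  then show ?thesis using assms by simp
qed

lemma small_category_relabel: "small_category (relabel f L)"
  unfolding small_category_def
proof (intro conjI)
  show "countable (Mor (relabel f L))" using sc by (simp add: small_category_def)
  show "\<forall>\<mu>\<in>Mor (relabel f L). src (relabel f L) \<mu> \<in> Mor (relabel f L) \<and> rng (relabel f L) \<mu> \<in> Mor (relabel f L)"
    using cat_laws(1) by auto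
  show "\<forall>\<mu>\<in>Mor (relabel f L). src (relabel f L) (src (relabel f L) \<mu>) = src (relabel f L) \<mu> \<and>
        rng (relabel f L) (src (relabel f L) \<mu>) = src (relabel f L) \<mu> \<and>
        src (relabel f L) (rng (relabel f L) \<mu>) = rng (relabel f L) \<mu> \<and>
        rng (relabel f L) (rng (relabel f L) \<mu>) = rng (relabel f L) \<mu>"
    using cat_laws(1,2) by auto
  show "\<forall>\<mu>\<in>Mor (relabel f L). comp (relabel f L) \<mu> (src (relabel f L) \<mu>) = \<mu> \<and>
        comp (relabel f L) (rng (relabel f L) \<mu>) \<mu> = \<mu>"
    using cat_laws(1,3) by auto
  show "\<forall>\<mu>\<in>Mor (relabel f L). \<forall>\<nu>\<in>Mor (relabel f L). src (relabel f L) \<mu> = rng (relabel f L) \<nu> \<longrightarrow>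
        comp (relabel f L) \<mu> \<nu> \<in> Mor (relabel f L) \<and> src (relabel f L) (comp (relabel f L) \<mu> \<nu>) = src (relabel f L) \<nu> \<and>
        rng (relabel f L) (comp (relabel f L) \<mu> \<nu>) = rng (relabel f L) \<mu>"
    using cat_laws(1,4) by auto
  show "\<forall>\<mu>\<in>Mor (relabel f L). \<forall>\<nu>\<in>Mor (relabel f L). \<forall>\<rho>\<in>Mor (relabel f L).
        src (relabel f L) \<mu> = rng (relabel f L) \<nu> \<longrightarrow> src (relabel f L) \<nu> = rng (relabel f L) \<rho> \<longrightarrow>
        comp (relabel f L) (comp (relabel f L) \<mu> \<nu>) \<rho> = comp (relabel f L) \<mu> (comp (relabel f L) \<nu> \<rho>)"
    using cat_laws(1,4,5) by auto
qed

lemma relabel_factorisation: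
  assumes l0: "l0 \<in> Mor L"
    and uq: "\<exists>!p. fst p \<in> Mor L \<and> snd p \<in> Mor L \<and> src L (fst p) = rng L (snd p) \<and>
                 deg L (fst p) = m \<and> deg L (snd p) = n \<and> l0 = comp L (fst p) (snd p)"
  shows "\<exists>!p. fst p \<in> Mor (relabel f L) \<and> snd p \<in> Mor (relabel f L) \<and>
           src (relabel f L) (fst p) = rng (relabel f L) (snd p) \<and>
           deg (relabel f L) (fst p) = m \<and> deg (relabel f L) (snd p) = n \<and>
           f l0 = comp (relabel f L) (fst p) (snd p)"
proof -
  obtain a0 b0 where p0: "a0 \<in> Mor L" "b0 \<in> Mor L" "src L a0 = rng L b0"
      "deg L a0 = m" "deg L b0 = n" "l0 = comp L a0 b0"
    and uq0: "\<And>a b. a \<in> Mor L \<Longrightarrow> b \<in> Mor L \<Longrightarrow> src L a = rng L b \<Longrightarrow> deg L a = m \<Longrightarrow>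
                deg L b = n \<Longrightarrow> l0 = comp L a b \<Longrightarrow> a = a0 \<and> b = b0"
    using uq by (metis fst_conv snd_conv prod.collapse)
  show ?thesis
  proof (rule ex1I[of _ "(f a0, f b0)"])
    show "fst (f a0, f b0) \<in> Mor (relabel f L) \<and> snd (f a0, f b0) \<in> Mor (relabel f L) \<and>
      src (relabel f L) (fst (f a0, f b0)) = rng (relabel f L) (snd (f a0, f b0)) \<and>
      deg (relabel f L) (fst (f a0, f b0)) = m \<and> deg (relabel f L) (snd (f a0, f b0)) = n \<and>
      f l0 = comp (relabel f L) (fst (f a0, f b0)) (snd (f a0, f b0))"
      using p0 by simp
  next
    fix q assume q: "fst q \<in> Mor (relabel f L) \<and> snd q \<in> Mor (relabel f L) \<and>
      src (relabel f L) (fst q) = rng (relabel f L) (snd q) \<and>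
      deg (relabel f L) (fst q) = m \<and> deg (relabel f L) (snd q) = n \<and>
      f l0 = comp (relabel f L) (fst q) (snd q)"
    then obtain a b where ab: "a \<in> Mor L" "b \<in> Mor L" "q = (f a, f b)"
      by (cases q) auto
    have s: "src L a = rng L b" using relabel_composable ab q by simp
    have "comp L a b \<in> Mor L" using cat_laws(4)[OF ab(1,2) s] by blast
    then have "l0 = comp L a b" using q ab s l0 by simp
    then show "q = (f a0, f b0)" using uq0[OF ab(1,2) s] q ab by simp
  qed
qed

theorem is_kgraph_relabel:
  assumes kg: "is_kgraph k L"
  shows "is_kgraph k (relabel f L)"
  unfolding is_kgraph_def
proof (intro conjI)
  show "small_category (relabel f L)" by (rule small_category_relabel)
  show "\<forall>\<mu>\<in>Mor (relabel f L). in_Nk k (deg (relabel f L) \<mu>)"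
    using kg by (auto simp: is_kgraph_def)
  show "\<forall>\<mu>\<in>Mor (relabel f L). deg (relabel f L) (src (relabel f L) \<mu>) = (\<lambda>i. 0) \<and>
          deg (relabel f L) (rng (relabel f L) \<mu>) = (\<lambda>i. 0)"
    using kg cat_laws(1) by (auto simp: is_kgraph_def)
  show "\<forall>\<mu>\<in>Mor (relabel f L). \<forall>\<nu>\<in>Mor (relabel f L). src (relabel f L) \<mu> = rng (relabel f L) \<nu> \<longrightarrow>
        deg (relabel f L) (comp (relabel f L) \<mu> \<nu>) = (\<lambda>i. deg (relabel f L) \<mu> i + deg (relabel f L) \<nu> i)"
  proof (intro ballI impI)
    fix \<mu> \<nu> assume "\<mu> \<in> Mor (relabel f L)" "\<nu> \<in> Mor (relabel f L)"
      and e: "src (relabel f L) \<mu> = rng (relabel f L) \<nu>"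
    then obtain x y where xy: "x \<in> Mor L" "\<mu> = f x" "y \<in> Mor L" "\<nu> = f y" by auto
    then have s: "src L x = rng L y" using relabel_composable e by simp
    then show "deg (relabel f L) (comp (relabel f L) \<mu> \<nu>) = (\<lambda>i. deg (relabel f L) \<mu> i + deg (relabel f L) \<nu> i)"
      using kg xy cat_laws(4)[OF xy(1,3) s] by (simp add: is_kgraph_def)
  qed
  show "\<forall>l\<in>Mor (relabel f L). \<forall>m n. in_Nk k m \<longrightarrow> in_Nk k n \<longrightarrow> deg (relabel f L) l = (\<lambda>i. m i + n i) \<longrightarrow>
        (\<exists>!p. fst p \<in> Mor (relabel f L) \<and> snd p \<in> Mor (relabel f L) \<and>
           src (relabel f L) (fst p) = rng (relabel f L) (snd p) \<and>
           deg (relabel f L) (fst p) = m \<and> deg (relabel f L) (snd p) = n \<and>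
           l = comp (relabel f L) (fst p) (snd p))"
  proof (intro ballI allI impI)
    fix l m n assume "l \<in> Mor (relabel f L)" "in_Nk k m" "in_Nk k n"
      and d: "deg (relabel f L) l = (\<lambda>i. m i + n i)"
    then obtain l0 where l0: "l0 \<in> Mor L" "l = f l0" by auto
    have "\<exists>!p. fst p \<in> Mor L \<and> snd p \<in> Mor L \<and> src L (fst p) = rng L (snd p) \<and>
                 deg L (fst p) = m \<and> deg L (snd p) = n \<and> l0 = comp L (fst p) (snd p)"
      using kg l0 d \<open>in_Nk k m\<close> \<open>in_Nk k n\<close> unfolding is_kgraph_def by simp
    then show "\<exists>!p. fst p \<in> Mor (relabel f L) \<and> snd p \<in> Mor (relabel f L) \<and>
           src (relabel f L) (fst p) = rng (relabel f L) (snd p) \<and>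
           deg (relabel f L) (fst p) = m \<and> deg (relabel f L) (snd p) = n \<and>
           l = comp (relabel f L) (fst p) (snd p)"
      unfolding l0(2) by (rule relabel_factorisation[OF l0(1)])
  qed
qed

lemma is_seg_relabel:
  assumes l: "l \<in> Mor L" and b: "b \<in> Mor L"
  shows "is_seg (relabel f L) (f l) m n (f b) \<longleftrightarrow> is_seg L l m n b"
proof
  assume "is_seg (relabel f L) (f l) m n (f b)"
  then obtain a c where ac: "a \<in> Mor L" "c \<in> Mor L" "deg L a = m" "src L a = rng L b" "src L b = rng L c"
     "f l = comp (relabel f L) (comp (relabel f L) (f a) (f b)) (f c)" "deg L b = (\<lambda>i. n i - m i)"
    unfolding is_seg_def using b cat_laws(1) by auto
  have "comp L a b \<in> Mor L" using cat_laws(4)[OF ac(1) b ac(4)] by blast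
  then have "l = comp L (comp L a b) c" using ac l b by (simp add: cat_laws(4))
  then show "is_seg L l m n b" unfolding is_seg_def using ac b by blast
next
  assume "is_seg L l m n b"
  then obtain a c where ac: "a \<in> Mor L" "c \<in> Mor L" "deg L a = m" "src L a = rng L b" "src L b = rng L c"
     "l = comp L (comp L a b) c" "deg L b = (\<lambda>i. n i - m i)"
    unfolding is_seg_def by auto
  have ab: "comp L a b \<in> Mor L" using cat_laws(4)[OF ac(1) b ac(4)] by blast
  have "f l = comp (relabel f L) (comp (relabel f L) (f a) (f b)) (f c)"
    using ac ab b by simp
  moreover have "f a \<in> Mor (relabel f L)" "f b \<in> Mor (relabel f L)" "f c \<in> Mor (relabel f L)"
    using ac b by simp_all
  ultimately show "is_seg (relabel f L) (f l) m n (f b)" unfolding is_seg_def using ac b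
    by (intro conjI bexI[of _ "f a"] bexI[of _ "f c"]) simp_all
qed

lemma seg_relabel:
  assumes l: "l \<in> Mor L" and u: "\<And>\<beta>. is_seg L l m n \<beta> \<longleftrightarrow> \<beta> = b"
  shows "seg (relabel f L) (f l) m n = f b"
proof (rule seg_unique)
  have b: "is_seg L l m n b" using u by simp
  then have bm: "b \<in> Mor L" by (simp add: is_seg_def)
  fix \<beta>
  show "is_seg (relabel f L) (f l) m n \<beta> \<longleftrightarrow> \<beta> = f b"
  proof
    assume c: "is_seg (relabel f L) (f l) m n \<beta>"
    then have "\<beta> \<in> f ` Mor L" by (simp add: is_seg_def)
    then obtain c0 where c0: "c0 \<in> Mor L" "\<beta> = f c0" by blast
    then have "is_seg L l m n c0" using is_seg_relabel[OF l c0(1)] c by simp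
    then show "\<beta> = f b" using u c0(2) by simp
  next
    assume "\<beta> = f b"
    then show "is_seg (relabel f L) (f l) m n \<beta>" using is_seg_relabel[OF l bm] b by simp
  qed
qed

end

text \<open>A vertex is a corner \<open>h \<in> {0,1}\<^sup>k\<close> of the unit cube together with a sign bit and a colour
  \<open>c < n\<close>.  The bottom corner carries the shared base vertex (bit 0) and one vertex of bit 1 per
  colour, the top corner two vertices (bits 0 and 1) per colour, and every other corner one
  vertex per colour.  Two vertices are comparable when their corners are, and they have the
  same colour unless the smaller one is the base vertex.  Each colour thus contributes four
  \<open>k\<close>-cubes, one for each choice of the bits at the bottom and at the top.\<close>

type_synonym vertex = "(nat \<Rightarrow> nat) \<times> nat \<times> nat"

definition corner0 :: "nat \<Rightarrow> nat" where "corner0 = (\<lambda>_. 0)"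
definition corner1 :: "nat \<Rightarrow> nat \<Rightarrow> nat" where "corner1 k = (\<lambda>j. if j < k then 1 else 0)"
definition base_vertex :: vertex where "base_vertex = (corner0, 0, 0)"

definition Vert :: "nat \<Rightarrow> nat \<Rightarrow> vertex set" where
  "Vert k n = {p. fst p \<le> corner1 k \<and>
     (if fst p = corner0 then (fst (snd p) = 0 \<and> snd (snd p) = 0) \<or> (fst (snd p) = 1 \<and> snd (snd p) < n)
      else if fst p = corner1 k then fst (snd p) \<le> 1 \<and> snd (snd p) < n
      else fst (snd p) = 0 \<and> snd (snd p) < n)}"

definition vle :: "vertex \<Rightarrow> vertex \<Rightarrow> bool" where
  "vle p q \<longleftrightarrow> p = q \<or> (fst p \<le> fst q \<and> fst p \<noteq> fst q \<and> (p = base_vertex \<or> snd (snd p) = snd (snd q)))"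

definition Arrows :: "nat \<Rightarrow> nat \<Rightarrow> (vertex \<times> vertex) set" where
  "Arrows k n = {\<mu>. fst \<mu> \<in> Vert k n \<and> snd \<mu> \<in> Vert k n \<and> vle (fst \<mu>) (snd \<mu>)}"

definition between :: "vertex \<Rightarrow> vertex \<Rightarrow> (nat \<Rightarrow> nat) \<Rightarrow> vertex" where
  "between p r c = (if c = fst p then p else if c = fst r then r else (c, 0, snd (snd r)))"

lemma Arrows_iff: "\<mu> \<in> Arrows k n \<longleftrightarrow> fst \<mu> \<in> Vert k n \<and> snd \<mu> \<in> Vert k n \<and> vle (fst \<mu>) (snd \<mu>)"
  by (simp add: Arrows_def)

lemma corner0_ne_corner1: "0 < k \<Longrightarrow> corner0 \<noteq> corner1 k"
  by (auto simp: corner0_def corner1_def fun_eq_iff)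

lemma le_corner0_iff: "h \<le> corner0 \<longleftrightarrow> h = corner0"
  by (auto simp: corner0_def le_fun_def fun_eq_iff)

lemma vle_refl[simp]: "vle p p" by (simp add: vle_def)

lemma vle_le: "vle p q \<Longrightarrow> fst p \<le> fst q"
  by (auto simp: vle_def)

lemma vle_eq: "vle p q \<Longrightarrow> fst p = fst q \<Longrightarrow> p = q"
  by (auto simp: vle_def)

lemma vle_colour: "vle u v \<Longrightarrow> u \<noteq> base_vertex \<Longrightarrow> snd (snd u) = snd (snd v)"
  unfolding vle_def by auto

lemma vle_trans: "vle p q \<Longrightarrow> vle q r \<Longrightarrow> vle p r"
proof -
  assume pq: "vle p q" and qr: "vle q r"
  show "vle p r"
  proof (cases "p = q \<or> q = r")
    case True then show ?thesis using pq qr by auto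
  next
    case False
    then have a: "fst p \<le> fst q" "fst p \<noteq> fst q" "p = base_vertex \<or> snd (snd p) = snd (snd q)"
      and b: "fst q \<le> fst r" "fst q \<noteq> fst r" "q = base_vertex \<or> snd (snd q) = snd (snd r)"
      using pq qr by (auto simp: vle_def)
    have "fst p \<noteq> fst r" using a b by (metis order_antisym)
    moreover have "q \<noteq> base_vertex"
    proof
      assume "q = base_vertex"
      then have "fst q = corner0" by (simp add: base_vertex_def)
      then show False using a(1,2) le_corner0_iff by simp
    qed
    ultimately show ?thesis using a b by (auto simp: vle_def)
  qed
qed

lemma Vert_le_corner1: "p \<in> Vert k n \<Longrightarrow> fst p \<le> corner1 k"
  by (simp add: Vert_def)

lemma le_corner1_beyond: "h \<le> corner1 k \<Longrightarrow> j \<ge> k \<Longrightarrow> h j = 0"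
  by (auto simp: le_fun_def corner1_def dest: spec[of _ j])

lemma Vert_le1: "e \<in> Vert k n \<Longrightarrow> fst e j \<le> 1"
  using Vert_le_corner1[of e k n] by (auto simp: le_fun_def corner1_def dest!: spec[of _ j] split: if_splits)

lemma below_corner1_has_zero: "h \<le> corner1 k \<Longrightarrow> h \<noteq> corner1 k \<Longrightarrow> \<exists>j<k. h j = 0"
proof (rule ccontr)
  assume a: "h \<le> corner1 k" "h \<noteq> corner1 k" "\<not> (\<exists>j<k. h j = 0)"
  have "h j = corner1 k j" for j
  proof (cases "j < k")
    case True then have "h j \<le> 1" "h j \<noteq> 0" using a by (auto simp: le_fun_def corner1_def dest: spec[of _ j])
    then show ?thesis using True by (simp add: corner1_def)
  next
    case False then show ?thesis using a(1) le_corner1_beyond[of h k j] by (simp add: corner1_def)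
  qed
  then show False using a(2) by auto
qed

lemma nonzero_has_nonzero: "h \<noteq> corner0 \<Longrightarrow> h \<le> corner1 k \<Longrightarrow> \<exists>j<k. h j \<noteq> 0"
proof (rule ccontr)
  assume a: "h \<noteq> corner0" "h \<le> corner1 k" "\<not> (\<exists>j<k. h j \<noteq> 0)"
  have "h j = 0" for j using a le_corner1_beyond[of h k j] by (cases "j < k") auto
  then show False using a(1) by (auto simp: corner0_def fun_eq_iff)
qed

lemma interior_corner:
  assumes "fst p \<le> c" "c \<le> fst r" "c \<noteq> fst p" "c \<noteq> fst r" "r \<in> Vert k n"
  shows "c \<noteq> corner0" "c \<noteq> corner1 k" "fst r \<noteq> corner0"
proof -
  show c0: "c \<noteq> corner0"
  proof
    assume "c = corner0"
    then have "fst p = c" using assms(1) le_corner0_iff by simp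
    then show False using assms(3) by simp
  qed
  show "c \<noteq> corner1 k"
  proof
    assume "c = corner1 k"
    then have "fst r = c" using assms(2) Vert_le_corner1[OF assms(5)] by (simp add: order_antisym)
    then show False using assms(4) by simp
  qed
  show "fst r \<noteq> corner0"
  proof
    assume "fst r = corner0"
    then have "c = corner0" using assms(2) le_corner0_iff by simp
    then show False using c0 by simp
  qed
qed

lemma between_props:
  assumes p: "p \<in> Vert k n" and r: "r \<in> Vert k n" and pr: "vle p r"
    and c1: "fst p \<le> c" and c2: "c \<le> fst r"
  shows "between p r c \<in> Vert k n" "vle p (between p r c)" "vle (between p r c) r" "fst (between p r c) = c"
proof -
  show "fst (between p r c) = c" by (auto simp: between_def)
  have "between p r c \<in> Vert k n \<and> vle p (between p r c) \<and> vle (between p r c) r"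
  proof (cases "c = fst p \<or> c = fst r")
    case True then show ?thesis using p r pr by (auto simp: between_def)
  next
    case False
    then have cp: "c \<noteq> fst p" "c \<noteq> fst r" by auto
    note ic = interior_corner[OF c1 c2 cp r]
    have "p \<noteq> r" using cp c1 c2 by (auto dest: order_antisym)
    then have pr2: "p = base_vertex \<or> snd (snd p) = snd (snd r)" using pr by (simp add: vle_def)
    have "snd (snd r) < n" using r ic(3) by (auto simp: Vert_def split: if_splits)
    then have "(c, 0, snd (snd r)) \<in> Vert k n"
      using ic c2 Vert_le_corner1[OF r] by (auto simp: Vert_def)
    moreover have "vle p (c, 0, snd (snd r))" using c1 cp pr2 by (auto simp: vle_def)
    moreover have "vle (c, 0, snd (snd r)) r" using c2 cp by (auto simp: vle_def)
    ultimately show ?thesis using cp by (simp add: between_def)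
  qed
  then show "between p r c \<in> Vert k n" "vle p (between p r c)" "vle (between p r c) r" by auto
qed

lemma between_unique:
  assumes q: "q \<in> Vert k n" and r: "r \<in> Vert k n" and pq: "vle p q" and qr: "vle q r"
  shows "q = between p r (fst q)"
proof (cases "fst q = fst p \<or> fst q = fst r")
  case True
  note either = this
  show ?thesis
  proof (cases "fst q = fst p")
    case True
    then show ?thesis using vle_eq[OF pq] by (simp add: between_def)
  next
    case False
    then have "fst q = fst r" using either by simp
    then show ?thesis using False vle_eq[OF qr] by (simp add: between_def)
  qed
next
  case False
  then have cp: "fst q \<noteq> fst p" "fst q \<noteq> fst r" by auto
  note ic = interior_corner[OF vle_le[OF pq] vle_le[OF qr] cp r]
  have x0: "fst (snd q) = 0" using q ic(1,2) unfolding Vert_def by simp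
  have "q \<noteq> base_vertex" using ic(1) by (auto simp: base_vertex_def)
  then have "snd (snd q) = snd (snd r)" using qr cp unfolding vle_def by auto
  then show ?thesis using cp x0 by (simp add: between_def prod_eq_iff)
qed

lemma finite_Vert: "finite (Vert k n)"
proof -
  have "finite {h::nat\<Rightarrow>nat. \<forall>x. (x \<in> {..<k} \<longrightarrow> h x \<in> {0,1}) \<and> (x \<notin> {..<k} \<longrightarrow> h x = 0)}"
    by (rule finite_set_of_finite_funs) auto
  moreover have "{h::nat\<Rightarrow>nat. h \<le> corner1 k} \<subseteq>
      {h. \<forall>x. (x \<in> {..<k} \<longrightarrow> h x \<in> {0,1}) \<and> (x \<notin> {..<k} \<longrightarrow> h x = 0)}"
  proof (intro subsetI CollectI allI)
    fix h x assume "h \<in> {h::nat\<Rightarrow>nat. h \<le> corner1 k}"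
    then have "h x \<le> corner1 k x" by (simp add: le_fun_def)
    then show "(x \<in> {..<k} \<longrightarrow> h x \<in> {0,1}) \<and> (x \<notin> {..<k} \<longrightarrow> h x = 0)"
      by (cases "x < k") (auto simp: corner1_def)
  qed
  ultimately have "finite {h::nat\<Rightarrow>nat. h \<le> corner1 k}" by (rule finite_subset[rotated])
  then have "finite ({h::nat\<Rightarrow>nat. h \<le> corner1 k} \<times> {..1::nat} \<times> {..n})" by auto
  moreover have "Vert k n \<subseteq> {h::nat\<Rightarrow>nat. h \<le> corner1 k} \<times> {..1::nat} \<times> {..n}"
  proof
    fix p assume p: "p \<in> Vert k n"
    then have "fst (snd p) \<le> 1 \<and> snd (snd p) \<le> n"
      unfolding Vert_def by (simp split: if_splits; linarith)
    then show "p \<in> {h::nat\<Rightarrow>nat. h \<le> corner1 k} \<times> {..1::nat} \<times> {..n}"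
      using Vert_le_corner1[OF p] by (cases p) auto
  qed
  ultimately show ?thesis by (rule finite_subset[rotated])
qed

lemma finite_Arrows: "finite (Arrows k n)"
proof -
  have "Arrows k n \<subseteq> Vert k n \<times> Vert k n" by (auto simp: Arrows_def)
  then show ?thesis using finite_Vert by (metis finite_SigmaI finite_subset)
qed

definition sphere_poset :: "nat \<Rightarrow> nat \<Rightarrow> (vertex \<times> vertex) kgraph" where
  "sphere_poset k n = graded_poset_kgraph (Vert k n) vle fst"

lemma Mor_sphere_poset: "Mor (sphere_poset k n) = Arrows k n"
  by (simp add: sphere_poset_def graded_poset_kgraph_def Arrows_def)

lemma Vert_interpolation:
  assumes "p \<in> Vert k n" "r \<in> Vert k n" "vle p r" "fst p \<le> c" "c \<le> fst r"
  shows "\<exists>!q. q \<in> Vert k n \<and> vle p q \<and> vle q r \<and> fst q = c"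
proof (rule ex1I[of _ "between p r c"])
  show "between p r c \<in> Vert k n \<and> vle p (between p r c) \<and> vle (between p r c) r \<and> fst (between p r c) = c"
    using between_props[OF assms] by blast
  fix q assume "q \<in> Vert k n \<and> vle p q \<and> vle q r \<and> fst q = c"
  then show "q = between p r c" using between_unique[of q k n r p] assms(2) by simp
qed

lemma Vert_in_Nk: "p \<in> Vert k n \<Longrightarrow> in_Nk k (fst p)"
  unfolding in_Nk_def using le_corner1_beyond[OF Vert_le_corner1] by blast

lemma Vert_graded_poset:
  "countable (Vert k n)"
  "p \<in> Vert k n \<Longrightarrow> vle p p"
  "p \<in> Vert k n \<Longrightarrow> q \<in> Vert k n \<Longrightarrow> r \<in> Vert k n \<Longrightarrow> vle p q \<Longrightarrow> vle q r \<Longrightarrow> vle p r"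
  "p \<in> Vert k n \<Longrightarrow> q \<in> Vert k n \<Longrightarrow> vle p q \<Longrightarrow> fst p \<le> fst q"
  by (simp_all add: countable_finite[OF finite_Vert] vle_le) (rule vle_trans)

lemmas Vert_grading = Vert_graded_poset Vert_in_Nk Vert_interpolation

lemma small_category_sphere_poset: "small_category (sphere_poset k n)"
  unfolding sphere_poset_def
  by (rule small_category_graded_poset[where V="Vert k n" and le=vle and g=fst, OF Vert_grading])

lemma is_kgraph_sphere_poset: "is_kgraph k (sphere_poset k n)"
  unfolding sphere_poset_def
  by (rule is_kgraph_graded_poset[where V="Vert k n" and le=vle and g=fst, OF Vert_grading])

definition poset_seg :: "vertex \<times> vertex \<Rightarrow> (nat \<Rightarrow> nat) \<Rightarrow> (nat \<Rightarrow> nat) \<Rightarrow> vertex \<times> vertex" where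
  "poset_seg l a b = (between (fst l) (snd l) (\<lambda>j. fst (fst l) j + a j),
                      between (fst l) (snd l) (\<lambda>j. fst (fst l) j + b j))"

lemma interpolant_Vert:
  assumes "p \<in> Vert k n" "r \<in> Vert k n" "vle p r" "fst p \<le> c" "c \<le> fst r"
  shows "interpolant (Vert k n) vle fst p r c = between p r c"
proof -
  note q = interpolant[where V="Vert k n" and le=vle and g=fst, OF Vert_grading assms]
  show ?thesis using between_unique[OF q(1) assms(2) q(2,3)] q(4) by simp
qed

lemma is_seg_sphere_poset:
  assumes l: "l \<in> Arrows k n" and ab: "a \<le> b" and br: "(\<lambda>j. fst (fst l) j + b j) \<le> fst (snd l)"
  shows "is_seg (sphere_poset k n) l a b \<beta> \<longleftrightarrow> \<beta> = poset_seg l a b"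
proof -
  obtain p r where lpr: "l = (p, r)" and p: "p \<in> Vert k n" and r: "r \<in> Vert k n" and pr: "vle p r"
    using l by (cases l) (auto simp: Arrows_iff)
  have cb: "fst p \<le> (\<lambda>j. fst p j + b j)" "(\<lambda>j. fst p j + b j) \<le> fst r"
    using br lpr by (simp_all add: le_fun_def)
  have "(\<lambda>j. fst p j + a j) \<le> (\<lambda>j. fst p j + b j)" using ab by (simp add: le_fun_def)
  then have "(\<lambda>j. fst p j + a j) \<le> fst r" using cb(2) by (rule order_trans)
  then have ca: "fst p \<le> (\<lambda>j. fst p j + a j)" "(\<lambda>j. fst p j + a j) \<le> fst r"
    by (simp_all add: le_fun_def)
  have "(p, r) \<in> Mor (graded_poset_kgraph (Vert k n) vle fst)"
    using l lpr Mor_sphere_poset by (simp add: sphere_poset_def)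
  from is_seg_graded_poset[where V="Vert k n" and le=vle and g=fst, OF Vert_grading this ab cb(2)]
  have "is_seg (sphere_poset k n) (p, r) a b \<beta> \<longleftrightarrow>
          \<beta> = (interpolant (Vert k n) vle fst p r (\<lambda>j. fst p j + a j),
                interpolant (Vert k n) vle fst p r (\<lambda>j. fst p j + b j))"
    unfolding sphere_poset_def .
  then show ?thesis
    unfolding lpr poset_seg_def interpolant_Vert[OF p r pr ca] interpolant_Vert[OF p r pr cb] by simp
qed

lemma poset_seg_props:
  assumes l: "l \<in> Arrows k n" and ab: "a \<le> b" and br: "(\<lambda>j. fst (fst l) j + b j) \<le> fst (snd l)"
  shows "poset_seg l a b \<in> Arrows k n"
    and "fst (fst (poset_seg l a b)) = (\<lambda>j. fst (fst l) j + a j)"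
    and "fst (snd (poset_seg l a b)) = (\<lambda>j. fst (fst l) j + b j)"
proof -
  have "is_seg (sphere_poset k n) l a b (poset_seg l a b)"
    using is_seg_sphere_poset[OF assms] by simp
  then show "poset_seg l a b \<in> Arrows k n"
    by (simp add: is_seg_def Mor_sphere_poset)
  have p: "fst l \<in> Vert k n" and r: "snd l \<in> Vert k n" and pr: "vle (fst l) (snd l)"
    using l by (auto simp: Arrows_iff)
  have "(\<lambda>j. fst (fst l) j + a j) \<le> (\<lambda>j. fst (fst l) j + b j)" using ab by (simp add: le_fun_def)
  then have "(\<lambda>j. fst (fst l) j + a j) \<le> fst (snd l)" using br by (rule order_trans)
  moreover have "fst (fst l) \<le> (\<lambda>j. fst (fst l) j + a j)" "fst (fst l) \<le> (\<lambda>j. fst (fst l) j + b j)"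
    by (simp_all add: le_fun_def)
  ultimately show "fst (fst (poset_seg l a b)) = (\<lambda>j. fst (fst l) j + a j)"
    and "fst (snd (poset_seg l a b)) = (\<lambda>j. fst (fst l) j + b j)"
    using between_props(4)[OF p r pr] br unfolding poset_seg_def by simp_all
qed

definition code :: "nat \<Rightarrow> nat \<Rightarrow> vertex \<times> vertex \<Rightarrow> nat" where
  "code k n = to_nat_on (Arrows k n)"

definition sphere_kgraph :: "nat \<Rightarrow> nat \<Rightarrow> nat kgraph" where
  "sphere_kgraph k n = relabel (code k n) (sphere_poset k n)"

lemma inj_code: "inj_on (code k n) (Mor (sphere_poset k n))"
  unfolding code_def Mor_sphere_poset
  by (rule inj_on_to_nat_on) (rule countable_finite[OF finite_Arrows])

lemma is_kgraph_sphere_kgraph: "is_kgraph k (sphere_kgraph k n)"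
  unfolding sphere_kgraph_def
  by (rule is_kgraph_relabel[OF inj_code small_category_sphere_poset is_kgraph_sphere_poset])

lemma finite_sphere_kgraph: "finite_kgraph (sphere_kgraph k n)"
  unfolding finite_kgraph_def sphere_kgraph_def using finite_Arrows
  by (simp add: relabel_def Mor_sphere_poset)

lemma sphere_kgraph_Mor: "Mor (sphere_kgraph k n) = code k n ` Arrows k n"
  by (simp add: sphere_kgraph_def relabel_def Mor_sphere_poset)

lemma sphere_kgraph_deg:
  assumes "l \<in> Arrows k n"
  shows "deg (sphere_kgraph k n) (code k n l) = (\<lambda>j. fst (snd l) j - fst (fst l) j)"
proof -
  have "deg (sphere_kgraph k n) (code k n l) = deg (sphere_poset k n) l"
    unfolding sphere_kgraph_def using assms
    by (intro relabel_simps(5)[OF inj_code small_category_sphere_poset]) (simp add: Mor_sphere_poset)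
  then show ?thesis by (simp add: sphere_poset_def graded_poset_kgraph_def)
qed

lemma code_eq_iff: "l \<in> Arrows k n \<Longrightarrow> l' \<in> Arrows k n \<Longrightarrow> code k n l = code k n l' \<longleftrightarrow> l = l'"
  using inj_code[of k n] by (simp add: Mor_sphere_poset inj_on_eq_iff)

lemma seg_sphere_kgraph:
  assumes l: "l \<in> Arrows k n" and ab: "a \<le> b" and br: "(\<lambda>j. fst (fst l) j + b j) \<le> fst (snd l)"
  shows "seg (sphere_kgraph k n) (code k n l) a b = code k n (poset_seg l a b)"
  unfolding sphere_kgraph_def
  by (rule seg_relabel[OF inj_code small_category_sphere_poset _ is_seg_sphere_poset[OF assms]])
     (simp add: Mor_sphere_poset l)

section \<open>A cubical parametrisation of the gauge sphere\<close>

definition cmax :: "nat \<Rightarrow> (nat \<Rightarrow> real) \<Rightarrow> real" where "cmax k T = Max (T ` {..<k})"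
definition cmin :: "nat \<Rightarrow> (nat \<Rightarrow> real) \<Rightarrow> real" where "cmin k T = Min (T ` {..<k})"

definition cube_sphere :: "nat \<Rightarrow> real \<Rightarrow> real \<Rightarrow> (nat \<Rightarrow> real) \<Rightarrow> (nat \<Rightarrow> real)" where
  "cube_sphere k s1 s2 T = (\<lambda>j. if j = 0 then s1 * (1 - cmax k T) else if j = 1 then s2 * cmin k T
      else if j \<le> k then T (j - 2) - T (k - 1) else 0)"

definition in_unit_cube :: "nat \<Rightarrow> (nat \<Rightarrow> real) \<Rightarrow> bool" where
  "in_unit_cube k T \<longleftrightarrow> (\<forall>j<k. 0 \<le> T j \<and> T j \<le> 1) \<and> (\<forall>j\<ge>k. T j = 0)"

lemma cmax_ge: "j < k \<Longrightarrow> T j \<le> cmax k T"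
  unfolding cmax_def by (rule Max_ge) auto
lemma cmin_le: "j < k \<Longrightarrow> cmin k T \<le> T j"
  unfolding cmin_def by (rule Min_le) auto
lemma cmax_in: "0 < k \<Longrightarrow> \<exists>j<k. cmax k T = T j"
proof -
  assume "0 < k"
  then have "Max (T ` {..<k}) \<in> T ` {..<k}" by (intro Max_in) auto
  then show ?thesis by (auto simp: cmax_def)
qed
lemma cmin_in: "0 < k \<Longrightarrow> \<exists>j<k. cmin k T = T j"
proof -
  assume "0 < k"
  then have "Min (T ` {..<k}) \<in> T ` {..<k}" by (intro Min_in) auto
  then show ?thesis by (auto simp: cmin_def)
qed

lemma cmax_box: "0 < k \<Longrightarrow> in_unit_cube k T \<Longrightarrow> 0 \<le> cmax k T \<and> cmax k T \<le> 1"
  using cmax_in[of k T] by (auto simp: in_unit_cube_def)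
lemma cmin_box: "0 < k \<Longrightarrow> in_unit_cube k T \<Longrightarrow> 0 \<le> cmin k T \<and> cmin k T \<le> 1"
  using cmin_in[of k T] by (auto simp: in_unit_cube_def)

lemma cmin_shift: "0 < k \<Longrightarrow> cmin k (\<lambda>j. T j + c) = cmin k T + c"
proof -
  assume k: "0 < k"
  have "(\<lambda>y. y + c) (Min (T ` {..<k})) = Min ((\<lambda>y. y + c) ` (T ` {..<k}))"
    by (rule mono_Min_commute) (use k in \<open>auto simp: mono_def\<close>)
  then show ?thesis by (simp add: cmin_def image_image)
qed

lemma cmin_cong: "(\<And>j. j < k \<Longrightarrow> T j = T' j) \<Longrightarrow> cmin k T = cmin k T'"
  unfolding cmin_def by (metis image_cong lessThan_iff)

lemma cube_sphere_beyond: "0 < k \<Longrightarrow> j > k \<Longrightarrow> cube_sphere k s1 s2 T j = 0"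
  by (simp add: cube_sphere_def)

text \<open>The coordinates \<open>2..k\<close> together with \<open>0\<close> are the differences \<open>T\<^sub>j - T\<^sub>k\<^sub>-\<^sub>1\<close>, so the spread
  of the image is \<open>max T - min T\<close>.\<close>

lemma cube_sphere_set:
  assumes k: "0 < k"
  shows "insert 0 (cube_sphere k s1 s2 T ` {2..k}) = (\<lambda>j. T j - T (k - 1)) ` {..<k}"
proof -
  have a: "cube_sphere k s1 s2 T ` {2..k} = (\<lambda>j. T j - T (k - 1)) ` {..<k-1}"
  proof
    show "cube_sphere k s1 s2 T ` {2..k} \<subseteq> (\<lambda>j. T j - T (k - 1)) ` {..<k - 1}"
    proof
      fix y assume "y \<in> cube_sphere k s1 s2 T ` {2..k}"
      then obtain j where j: "j \<in> {2..k}" "y = cube_sphere k s1 s2 T j" by auto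
      then have "y = T (j - 2) - T (k - 1)" "j - 2 < k - 1" by (auto simp: cube_sphere_def)
      then show "y \<in> (\<lambda>j. T j - T (k - 1)) ` {..<k - 1}" by auto
    qed
    show "(\<lambda>j. T j - T (k - 1)) ` {..<k - 1} \<subseteq> cube_sphere k s1 s2 T ` {2..k}"
    proof
      fix y assume "y \<in> (\<lambda>j. T j - T (k - 1)) ` {..<k - 1}"
      then obtain j where j: "j < k - 1" "y = T j - T (k - 1)" by auto
      then have "cube_sphere k s1 s2 T (j + 2) = y" "j + 2 \<in> {2..k}" by (auto simp: cube_sphere_def)
      then show "y \<in> cube_sphere k s1 s2 T ` {2..k}" by (metis image_eqI)
    qed
  qed
  have b: "{..<k} = insert (k - 1) {..<k-1}" using k by auto
  show ?thesis unfolding a b by simp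
qed

lemma spread_cube_sphere:
  assumes k: "0 < k"
  shows "spread k (cube_sphere k s1 s2 T) = cmax k T - cmin k T"
proof -
  have e: "insert 0 (cube_sphere k s1 s2 T ` {2..k}) = (\<lambda>y. y - T (k - 1)) ` (T ` {..<k})"
    unfolding cube_sphere_set[OF k] by (simp add: image_image)
  have "Max ((\<lambda>y. y - T (k - 1)) ` (T ` {..<k})) = Max (T ` {..<k}) - T (k - 1)"
    by (rule mono_Max_commute[symmetric]) (use k in \<open>auto simp: mono_def\<close>)
  moreover have "Min ((\<lambda>y. y - T (k - 1)) ` (T ` {..<k})) = Min (T ` {..<k}) - T (k - 1)"
    by (rule mono_Min_commute[symmetric]) (use k in \<open>auto simp: mono_def\<close>)
  ultimately show ?thesis unfolding spread_def e cmax_def cmin_def by simp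
qed

lemma gauge_cube_sphere:
  assumes k: "0 < k" and T: "in_unit_cube k T" and s: "\<bar>s1\<bar> = 1" "\<bar>s2\<bar> = 1"
  shows "gauge k (cube_sphere k s1 s2 T) = 1"
proof -
  have a: "\<bar>cube_sphere k s1 s2 T 0\<bar> = 1 - cmax k T" using cmax_box[OF k T] s by (simp add: cube_sphere_def abs_mult)
  have b: "\<bar>cube_sphere k s1 s2 T 1\<bar> = cmin k T" using cmin_box[OF k T] s by (simp add: cube_sphere_def abs_mult)
  show ?thesis unfolding gauge_def a b spread_cube_sphere[OF k] by simp
qed

lemma cube_sphere_inj:
  assumes k: "0 < k" and T: "in_unit_cube k T" and T': "in_unit_cube k T'" and s: "\<bar>s2\<bar> = 1" "\<bar>s2'\<bar> = 1"
    and e: "cube_sphere k s1 s2 T = cube_sphere k s1' s2' T'"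
  shows "T = T'"
proof -
  have "s2 * cmin k T = s2' * cmin k T'" using fun_cong[OF e, of 1] by (simp add: cube_sphere_def)
  then have "\<bar>s2\<bar> * \<bar>cmin k T\<bar> = \<bar>s2'\<bar> * \<bar>cmin k T'\<bar>" by (metis abs_mult)
  then have mn: "cmin k T = cmin k T'" using s cmin_box[OF k T] cmin_box[OF k T'] by simp
  define c where "c = T' (k - 1) - T (k - 1)"
  have sh: "T' j = T j + c" if "j < k" for j
  proof (cases "j = k - 1")
    case True then show ?thesis by (simp add: c_def)
  next
    case False
    then have "j < k - 1" using that by auto
    then have "cube_sphere k s1 s2 T (j + 2) = T j - T (k - 1)" "cube_sphere k s1' s2' T' (j + 2) = T' j - T' (k - 1)"
      by (auto simp: cube_sphere_def)
    then show ?thesis using e by (simp add: c_def)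
  qed
  have "cmin k T' = cmin k T + c" using cmin_cong[of k T' "\<lambda>j. T j + c"] sh cmin_shift[OF k] by simp
  then have "c = 0" using mn by simp
  then show "T = T'" using sh T T' by (auto simp: in_unit_cube_def fun_eq_iff) (metis not_le)
qed

lemma cube_sphere_first_one:
  assumes k: "0 < k" and T: "in_unit_cube k T" and s: "\<bar>s1\<bar> = 1" and e: "cube_sphere k s1 s2 T 0 = 1"
  shows "s1 = 1 \<and> (\<forall>j. T j = 0)"
proof -
  have m: "s1 * (1 - cmax k T) = 1" using e by (simp add: cube_sphere_def)
  have b: "0 \<le> cmax k T" "cmax k T \<le> 1" using cmax_box[OF k T] by auto
  have "s1 = 1 \<or> s1 = -1" using s by auto
  then have s1: "s1 = 1" "cmax k T = 0" using m b by auto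
  have "T j = 0" for j
  proof (cases "j < k")
    case True then show ?thesis using cmax_ge[OF True, of T] s1 T by (auto simp: in_unit_cube_def)
  next
    case False then show ?thesis using T by (auto simp: in_unit_cube_def)
  qed
  then show ?thesis using s1 by simp
qed

text \<open>Conversely, every point \<open>S\<close> of gauge \<open>1\<close> agrees in the coordinates \<open>2..k\<close> with the image of
  a cube point \<open>T\<close> whose minimum and maximum are determined by \<open>S\<^sub>1\<close> and \<open>S\<^sub>0\<close>: shift the
  values \<open>S\<^sub>2, \<dots>, S\<^sub>k, 0\<close> so that their minimum becomes \<open>|S\<^sub>1|\<close>.\<close>

lemma cube_sphere_preimage:
  assumes k: "0 < k" and rS: "gauge k S = 1"
  obtains T where "in_unit_cube k T" "cmin k T = \<bar>S 1\<bar>" "cmax k T = 1 - \<bar>S 0\<bar>"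
    "\<And>s1 s2 j. j \<in> {2..k} \<Longrightarrow> cube_sphere k s1 s2 T j = S j"
proof -
  define c0 where "c0 = Min (insert 0 (S ` {2..k}))"
  define T where "T = (\<lambda>j. if j < k then (if j = k - 1 then 0 else S (j + 2)) + (\<bar>S 1\<bar> - c0) else 0)"
  have Tk: "T (k - 1) = \<bar>S 1\<bar> - c0" using k by (simp add: T_def)
  have SvS: "cube_sphere k s1 s2 T j = S j" if "j \<in> {2..k}" for s1 s2 j
  proof -
    have "j - 2 < k" "j - 2 \<noteq> k - 1 \<longrightarrow> j - 2 + 2 = j" using that by auto
    then show ?thesis using that k by (auto simp: cube_sphere_def T_def)
  qed
  have imgS: "S ` {2..k} = cube_sphere k 1 1 T ` {2..k}" using SvS by (auto intro: image_cong)
  have nuS: "spread k S = cmax k T - cmin k T"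
    using spread_cube_sphere[OF k, of 1 1 T] by (simp add: spread_def imgS)
  have mnT: "cmin k T = \<bar>S 1\<bar>"
  proof -
    have "c0 = Min ((\<lambda>y. y - T (k - 1)) ` (T ` {..<k}))"
      unfolding c0_def imgS cube_sphere_set[OF k] by (simp add: image_image)
    also have "\<dots> = Min (T ` {..<k}) - T (k - 1)"
      by (rule mono_Min_commute[symmetric]) (use k in \<open>auto simp: mono_def\<close>)
    finally show ?thesis using Tk by (simp add: cmin_def)
  qed
  have mxT: "cmax k T = 1 - \<bar>S 0\<bar>" using rS nuS mnT by (simp add: gauge_def)
  have "in_unit_cube k T"
    unfolding in_unit_cube_def
  proof (intro conjI allI impI)
    fix j assume "j < k"
    then show "0 \<le> T j" "T j \<le> 1" using cmin_le[of j k T] cmax_ge[of j k T] mnT mxT by auto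
  next
    fix j assume "k \<le> j" then show "T j = 0" by (simp add: T_def)
  qed
  then show ?thesis using that mnT mxT SvS by blast
qed

lemma continuous_cube_sphere:
  assumes k: "0 < k" and g: "\<And>j. continuous_map X euclideanreal (\<lambda>x. g x j)"
  shows "continuous_map X (powertop_real UNIV) (\<lambda>x. with_colour k c (cube_sphere k s1 s2 (g x)))"
  unfolding continuous_map_componentwise_UNIV
proof
  fix j
  have mx: "continuous_map X euclideanreal (\<lambda>x. cmax k (g x))"
    unfolding cmax_def using k g by (intro continuous_map_Max) auto
  have mn: "continuous_map X euclideanreal (\<lambda>x. cmin k (g x))"
    unfolding cmin_def using k g by (intro continuous_map_Min) auto
  have "continuous_map X euclideanreal (\<lambda>x. cube_sphere k s1 s2 (g x) i)" for i
    unfolding cube_sphere_def using mx mn g by (simp add: continuous_intros)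
  then show "continuous_map X euclideanreal (\<lambda>x. with_colour k c (cube_sphere k s1 s2 (g x)) j)"
    unfolding with_colour_def by (cases "j = Suc k") (simp_all add: continuous_intros)
qed

text \<open>A cube point with the right extremal values and the right signs is mapped onto \<open>S\<close>;
  the signs only matter where the corresponding coordinate of \<open>S\<close> does not vanish.\<close>

lemma cube_sphere_eqI:
  assumes mx: "cmax k T = 1 - \<bar>S 0\<bar>" and mn: "cmin k T = \<bar>S 1\<bar>"
    and mid: "\<And>j. j \<in> {2..k} \<Longrightarrow> cube_sphere k s1 s2 T j = S j"
    and beyond: "\<And>j. k < j \<Longrightarrow> S j = 0" and k: "0 < k"
    and s1: "cmax k T < 1 \<Longrightarrow> s1 = (if S 0 < 0 then -1 else 1)"
    and s2: "0 < cmin k T \<Longrightarrow> s2 = (if S 1 < 0 then -1 else 1)"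
  shows "cube_sphere k s1 s2 T = S"
proof
  fix j
  consider "j = 0" | "j = 1" | "j \<in> {2..k}" | "k < j" using k by force
  then show "cube_sphere k s1 s2 T j = S j"
  proof cases
    case 1
    then show ?thesis using mx s1 by (cases "S 0 = 0") (auto simp: cube_sphere_def)
  next
    case 2
    then show ?thesis using mn s2 k by (cases "S 1 = 0") (auto simp: cube_sphere_def)
  qed (simp_all add: mid beyond cube_sphere_beyond[OF k])
qed

text \<open>A cell is an arrow \<open>(u, v)\<close> of degree at most one in each direction together with
  fractional coordinates \<open>f\<close>, positive exactly in the directions where \<open>v\<close> lies above \<open>u\<close>;
  every point of the realisation is represented by exactly one cell.\<close>

definition tag_sign :: "vertex \<Rightarrow> real" where "tag_sign e = (if fst (snd e) = 1 then -1 else 1)"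

definition cell_coords :: "vertex \<Rightarrow> (nat \<Rightarrow> real) \<Rightarrow> nat \<Rightarrow> real" where
  "cell_coords u f = (\<lambda>j. real (fst u j) + f j)"

definition cell_map :: "nat \<Rightarrow> vertex \<times> vertex \<Rightarrow> (nat \<Rightarrow> real) \<Rightarrow> (nat \<Rightarrow> real)" where
  "cell_map k uv f = with_colour k (snd (snd (snd uv)))
     (cube_sphere k (tag_sign (fst uv)) (tag_sign (snd uv)) (cell_coords (fst uv) f))"

definition valid_cell :: "nat \<Rightarrow> nat \<Rightarrow> vertex \<times> vertex \<Rightarrow> (nat \<Rightarrow> real) \<Rightarrow> bool" where
  "valid_cell k n uv f \<longleftrightarrow> uv \<in> Arrows k n \<and> (\<forall>j. 0 \<le> f j \<and> f j < 1) \<and> (\<forall>j\<ge>k. f j = 0) \<and>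
     (\<forall>j. fst (snd uv) j = fst (fst uv) j + (if f j > 0 then 1 else 0))"

lemma abs_tag_sign: "\<bar>tag_sign e\<bar> = 1" by (simp add: tag_sign_def)

text \<open>A vertex is determined by its corner, tag bit and colour.  The tag bit can only be
  nonzero at the bottom and top corners, and there its sign recovers it.\<close>

lemma tag_sign_eq:
  "e \<in> Vert k n \<Longrightarrow> e' \<in> Vert k n \<Longrightarrow> tag_sign e = tag_sign e' \<Longrightarrow> fst (snd e) = fst (snd e')"
  unfolding tag_sign_def Vert_def by (auto split: if_splits)

lemma Vert_tag_le1: "e \<in> Vert k n \<Longrightarrow> fst (snd e) \<le> 1"
  unfolding Vert_def by (auto split: if_splits)

lemma Vert_base: "e \<in> Vert k n \<Longrightarrow> fst e = corner0 \<Longrightarrow> fst (snd e) = 0 \<Longrightarrow> e = base_vertex"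
  unfolding Vert_def base_vertex_def by (auto simp: prod_eq_iff)

lemma Vert_interior_untagged:
  "e \<in> Vert k n \<Longrightarrow> fst e \<noteq> corner0 \<Longrightarrow> fst e \<noteq> corner1 k \<Longrightarrow> fst (snd e) = 0"
  unfolding Vert_def by auto

context
  fixes k n :: nat and u v :: vertex and f :: "nat \<Rightarrow> real"
  assumes k: "0 < k" and vk: "valid_cell k n (u, v) f"
begin

lemma valid_cell_lower: "u \<in> Vert k n" and valid_cell_upper: "v \<in> Vert k n" and valid_cell_vle: "vle u v"
  using vk by (auto simp: valid_cell_def Arrows_iff)

lemma valid_cell_frac: "0 \<le> f j" "f j < 1" "j \<ge> k \<Longrightarrow> f j = 0"
  using vk by (auto simp: valid_cell_def)

lemma valid_cell_step: "fst v j = fst u j + (if f j > 0 then 1 else 0)"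
  using vk by (auto simp: valid_cell_def)

lemma valid_cell_le1: "fst u j \<le> 1" "fst v j \<le> 1"
proof -
  have "fst u \<le> corner1 k" "fst v \<le> corner1 k" using valid_cell_lower valid_cell_upper Vert_le_corner1 by auto
  then show "fst u j \<le> 1" "fst v j \<le> 1" by (auto simp: le_fun_def corner1_def dest!: spec[of _ j] split: if_splits)
qed


lemma cell_coords_box: "in_unit_cube k (cell_coords u f)"
  unfolding in_unit_cube_def cell_coords_def
proof (intro conjI allI impI)
  fix j
  show "0 \<le> real (fst u j) + f j" using valid_cell_frac(1)[of j] by simp
  show "real (fst u j) + f j \<le> 1"
  proof (cases "f j > 0")
    case True then have "fst u j = 0" using valid_cell_step[of j] valid_cell_le1(2)[of j] by simp
    then show ?thesis using valid_cell_frac(2)[of j] by simp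
  next
    case False then show ?thesis using valid_cell_le1(1)[of j] valid_cell_frac(1)[of j] by simp
  qed
  assume "k \<le> j"
  then show "real (fst u j) + f j = 0" using valid_cell_frac(3)[of j] le_corner1_beyond[OF Vert_le_corner1[OF valid_cell_lower]] by simp
qed

lemma cell_coords_floor: "fst u j = nat \<lfloor>(cell_coords u f) j\<rfloor>" "f j = (cell_coords u f) j - of_int \<lfloor>(cell_coords u f) j\<rfloor>"
proof -
  have "\<lfloor>(cell_coords u f) j\<rfloor> = int (fst u j)" unfolding cell_coords_def using valid_cell_frac(1,2)[of j] by (simp add: floor_eq_iff)
  then show "fst u j = nat \<lfloor>(cell_coords u f) j\<rfloor>" "f j = (cell_coords u f) j - of_int \<lfloor>(cell_coords u f) j\<rfloor>" by (simp_all add: cell_coords_def)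
qed

lemma cmax_at_bottom: "fst u = corner0 \<Longrightarrow> cmax k (cell_coords u f) < 1"
  using cmax_in[OF k, of "cell_coords u f"] valid_cell_frac(2) by (auto simp: cell_coords_def corner0_def)

lemma cmin_at_top: "fst v = corner1 k \<Longrightarrow> 0 < cmin k (cell_coords u f)"
proof -
  assume a: "fst v = corner1 k"
  obtain j where j: "j < k" "cmin k (cell_coords u f) = (cell_coords u f) j" using cmin_in[OF k] by blast
  have "fst v j = 1" using a j by (simp add: corner1_def)
  then have "fst u j = 1 \<or> f j > 0" using valid_cell_step[of j] by (auto split: if_splits)
  then show ?thesis using j valid_cell_frac(1)[of j] by (auto simp: cell_coords_def)
qed

lemma cmax_off_bottom: "fst u \<noteq> corner0 \<Longrightarrow> cmax k (cell_coords u f) = 1"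
proof -
  assume "fst u \<noteq> corner0"
  then obtain j where j: "j < k" "fst u j \<noteq> 0"
    using nonzero_has_nonzero Vert_le_corner1[OF valid_cell_lower] by blast
  then have "1 \<le> cell_coords u f j" using valid_cell_frac(1)[of j] by (simp add: cell_coords_def)
  then show ?thesis using cmax_ge[OF j(1), of "cell_coords u f"] cmax_box[OF k cell_coords_box] by simp
qed

lemma cmin_off_top: "fst v \<noteq> corner1 k \<Longrightarrow> cmin k (cell_coords u f) = 0"
proof -
  assume "fst v \<noteq> corner1 k"
  then obtain j where j: "j < k" "fst v j = 0"
    using below_corner1_has_zero[OF Vert_le_corner1[OF valid_cell_upper]] by blast
  then have "fst u j = 0" "\<not> f j > 0" using valid_cell_step[of j] by (auto split: if_splits)
  then have "cell_coords u f j = 0" using valid_cell_frac(1)[of j] by (simp add: cell_coords_def)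
  then show ?thesis using cmin_le[OF j(1), of "cell_coords u f"] cmin_box[OF k cell_coords_box] by simp
qed

lemma valid_cell_top: "fst u = corner1 k \<Longrightarrow> v = u"
  using vle_le[OF valid_cell_vle] Vert_le_corner1[OF valid_cell_upper] vle_eq[OF valid_cell_vle]
  by (metis order_antisym)

lemma valid_cell_bottom: "fst v = corner0 \<Longrightarrow> u = v"
proof -
  assume a: "fst v = corner0"
  have "fst u \<le> corner0" using vle_le[OF valid_cell_vle] a by simp
  then have "fst u = fst v" using a le_corner0_iff by simp
  then show "u = v" using vle_eq[OF valid_cell_vle] by simp
qed

lemma valid_cell_base:
  assumes "v = base_vertex"
  shows "u = base_vertex" "cell_coords u f = (\<lambda>_. 0)"
proof -
  have "u = v" using valid_cell_bottom assms by (simp add: base_vertex_def)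
  then show "u = base_vertex" using assms by simp
  have "f j = 0" for j
    using valid_cell_step[of j] valid_cell_frac(1)[of j] \<open>u = v\<close> by (auto split: if_splits)
  then show "cell_coords u f = (\<lambda>_. 0)"
    using \<open>u = base_vertex\<close> by (simp add: cell_coords_def base_vertex_def corner0_def)
qed

lemma valid_cell_colour: "u \<noteq> base_vertex \<Longrightarrow> snd (snd u) = snd (snd v)"
  using vle_colour[OF valid_cell_vle] by simp

end

text \<open>Two valid cells with the same image coincide: the cube point, hence the lower corner and
  the fractional part, is recovered from the coordinates \<open>2..k\<close> and the minimum; the tag
  bits are recovered from the signs of the first two coordinates whenever they matter, and
  the colour from the last coordinate, except at the base point.\<close>

context
  fixes k n :: nat and u v u' v' :: vertex and f f' :: "nat \<Rightarrow> real"
  assumes k: "0 < k" and v1: "valid_cell k n (u, v) f" and v2: "valid_cell k n (u', v') f'"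
    and same: "cell_map k (u, v) f = cell_map k (u', v') f'"
begin

lemma same_image_spheres:
  "cube_sphere k (tag_sign u) (tag_sign v) (cell_coords u f) =
   cube_sphere k (tag_sign u') (tag_sign v') (cell_coords u' f')"
proof
  fix j show "cube_sphere k (tag_sign u) (tag_sign v) (cell_coords u f) j =
              cube_sphere k (tag_sign u') (tag_sign v') (cell_coords u' f') j"
    using fun_cong[OF same, of j] cube_sphere_beyond[OF k, of "Suc k"]
    by (cases "j = Suc k") (simp_all add: cell_map_def with_colour_def)
qed

lemma same_image_coords: "fst u = fst u'" "f = f'" "fst v = fst v'"
proof -
  have T: "cell_coords u f = cell_coords u' f'"
    by (rule cube_sphere_inj[OF k cell_coords_box[OF k v1] cell_coords_box[OF k v2]
          abs_tag_sign abs_tag_sign same_image_spheres])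
  show fu: "fst u = fst u'" and ff: "f = f'"
    using cell_coords_floor[OF k v1] cell_coords_floor[OF k v2] T by (simp_all add: fun_eq_iff)
  show "fst v = fst v'"
    using valid_cell_step[OF k v1] valid_cell_step[OF k v2] fu ff by (simp add: fun_eq_iff)
qed

abbreviation (input) "image_point \<equiv> cube_sphere k (tag_sign u) (tag_sign v) (cell_coords u f)"

lemma same_image_colour: "image_point 0 \<noteq> 1 \<Longrightarrow> snd (snd v) = snd (snd v')"
  using fun_cong[OF same, of "Suc k"] same_image_spheres
  by (auto simp: cell_map_def with_colour_def)

lemma same_image_base:
  assumes "image_point 0 = 1"
  shows "u = u' \<and> v = v'"
proof -
  have "cube_sphere k (tag_sign u') (tag_sign v') (cell_coords u' f') 0 = 1"
    using assms same_image_spheres by simp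
  then have a': "tag_sign u' = 1" "\<forall>j. cell_coords u' f' j = 0"
    using cube_sphere_first_one[OF k cell_coords_box[OF k v2] abs_tag_sign] by auto
  have a: "tag_sign u = 1" "\<forall>j. cell_coords u f j = 0"
    using cube_sphere_first_one[OF k cell_coords_box[OF k v1] abs_tag_sign assms] by auto
  have zu: "fst u = corner0" "fst u' = corner0"
    using a(2) cell_coords_floor(1)[OF k v1] same_image_coords(1) by (auto simp: corner0_def fun_eq_iff)
  have "u = base_vertex" "u' = base_vertex"
    using Vert_base[OF valid_cell_lower[OF k v1] zu(1)] Vert_base[OF valid_cell_lower[OF k v2] zu(2)]
      a(1) a'(1) Vert_tag_le1[OF valid_cell_lower[OF k v1]] Vert_tag_le1[OF valid_cell_lower[OF k v2]]
    by (auto simp: tag_sign_def split: if_splits)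
  moreover have "f = (\<lambda>_. 0)" using a(2) cell_coords_floor(2)[OF k v1] by (auto simp: fun_eq_iff)
  then have "fst v = corner0" using valid_cell_step[OF k v1] zu by (simp add: corner0_def fun_eq_iff)
  then have "v = u" "v' = u'"
    using valid_cell_bottom[OF k v1] valid_cell_bottom[OF k v2] same_image_coords(3) by auto
  ultimately show ?thesis by simp
qed

text \<open>The tag bit of a bottom (top) vertex is the sign of the first (second) coordinate,
  which does not vanish there.\<close>

lemma same_image_bottom_tag:
  assumes "fst u = corner0"
  shows "fst (snd u) = fst (snd u')"
proof -
  have "cmax k (cell_coords u f) < 1" by (rule cmax_at_bottom[OF k v1 assms])
  moreover have "tag_sign u * (1 - cmax k (cell_coords u f)) = tag_sign u' * (1 - cmax k (cell_coords u f))"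
    using fun_cong[OF same_image_spheres, of 0] same_image_coords(1,2)
    by (simp add: cube_sphere_def cell_coords_def)
  ultimately have "tag_sign u = tag_sign u'" by simp
  then show ?thesis by (rule tag_sign_eq[OF valid_cell_lower[OF k v1] valid_cell_lower[OF k v2]])
qed

lemma same_image_top_tag:
  assumes "fst v = corner1 k"
  shows "fst (snd v) = fst (snd v')"
proof -
  have "cmin k (cell_coords u f) > 0" by (rule cmin_at_top[OF k v1 assms])
  moreover have "tag_sign v * cmin k (cell_coords u f) = tag_sign v' * cmin k (cell_coords u f)"
    using fun_cong[OF same_image_spheres, of 1] same_image_coords(1,2)
    by (simp add: cube_sphere_def cell_coords_def)
  ultimately have "tag_sign v = tag_sign v'" by simp
  then show ?thesis by (rule tag_sign_eq[OF valid_cell_upper[OF k v1] valid_cell_upper[OF k v2]])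
qed

lemma same_image_lower:
  assumes nb: "image_point 0 \<noteq> 1"
  shows "u = u'"
proof -
  note fu = same_image_coords(1) and cv = same_image_colour[OF nb]
  note pu = valid_cell_lower[OF k v1] and pu' = valid_cell_lower[OF k v2]
  have colour: "snd (snd u) = snd (snd u')" if "u \<noteq> base_vertex" "u' \<noteq> base_vertex"
    using valid_cell_colour[OF k v1 that(1)] valid_cell_colour[OF k v2 that(2)] cv by simp
  consider "fst u = corner0" | "fst u = corner1 k" | "fst u \<noteq> corner0" "fst u \<noteq> corner1 k" by blast
  then show ?thesis
  proof cases
    case 1
    note x = same_image_bottom_tag[OF 1]
    show ?thesis
    proof (cases "u = base_vertex \<or> u' = base_vertex")
      case True
      then have "fst (snd u) = 0" "fst (snd u') = 0" using x by (auto simp: base_vertex_def)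
      then show ?thesis using Vert_base[OF pu 1] Vert_base[OF pu'] 1 fu by simp
    next
      case False
      then show ?thesis using fu x colour by (auto simp: prod_eq_iff)
    qed
  next
    case 2
    have vu: "v = u" "v' = u'" using valid_cell_top[OF k v1 2] valid_cell_top[OF k v2] 2 fu by auto
    then have "fst (snd u) = fst (snd u')" using same_image_top_tag 2 by simp
    then show ?thesis using vu fu cv by (auto simp: prod_eq_iff)
  next
    case 3
    then have "fst (snd u) = 0" "fst (snd u') = 0" "u \<noteq> base_vertex" "u' \<noteq> base_vertex"
      using Vert_interior_untagged[OF pu] Vert_interior_untagged[OF pu'] fu by (auto simp: base_vertex_def)
    then show ?thesis using fu colour by (auto simp: prod_eq_iff)
  qed
qed

lemma same_image_upper:
  assumes nb: "image_point 0 \<noteq> 1"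
  shows "v = v'"
proof -
  note fv = same_image_coords(3) and cv = same_image_colour[OF nb]
  note pv = valid_cell_upper[OF k v1] and pv' = valid_cell_upper[OF k v2]
  consider "fst v = corner0" | "fst v = corner1 k" | "fst v \<noteq> corner0" "fst v \<noteq> corner1 k" by blast
  then show ?thesis
  proof cases
    case 1
    have "u = v" by (rule valid_cell_bottom[OF k v1 1])
    moreover have "u' = v'" using valid_cell_bottom[OF k v2] 1 fv by simp
    ultimately show ?thesis using same_image_lower[OF nb] by simp
  next
    case 2
    then show ?thesis using same_image_top_tag[OF 2] fv cv by (simp add: prod_eq_iff)
  next
    case 3
    then have "fst (snd v) = 0" "fst (snd v') = 0" using Vert_interior_untagged[OF pv] Vert_interior_untagged[OF pv'] fv by auto
    then show ?thesis using fv cv by (simp add: prod_eq_iff)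
  qed
qed

end

lemma cell_map_inj:
  assumes "0 < k" "valid_cell k n (u, v) f" "valid_cell k n (u', v') f'"
    and "cell_map k (u, v) f = cell_map k (u', v') f'"
  shows "u = u' \<and> v = v' \<and> f = f'"
proof (cases "cube_sphere k (tag_sign u) (tag_sign v) (cell_coords u f) 0 = 1")
  case True
  then show ?thesis using same_image_base[OF assms] same_image_coords(2)[OF assms] by simp
next
  case False
  then show ?thesis
    using same_image_lower[OF assms] same_image_upper[OF assms] same_image_coords(2)[OF assms] by simp
qed

definition frac_part :: "(nat \<Rightarrow> real) \<Rightarrow> nat \<Rightarrow> real" where
  "frac_part t = (\<lambda>i. t i - of_int \<lfloor>t i\<rfloor>)"

lemma cel_flr: "0 \<le> x \<Longrightarrow> nat \<lceil>x\<rceil> = nat \<lfloor>x\<rfloor> + (if x - of_int \<lfloor>x\<rfloor> > 0 then 1 else 0)"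
proof -
  assume x: "0 \<le> x"
  show ?thesis
  proof (cases "x = of_int \<lfloor>x\<rfloor>")
    case True
    then have "\<lceil>x\<rceil> = \<lfloor>x\<rfloor>" by (metis ceiling_of_int)
    then show ?thesis using True by simp
  next
    case False
    then have "\<lceil>x\<rceil> = \<lfloor>x\<rfloor> + 1" by (simp add: ceiling_altdef)
    moreover have "x - of_int \<lfloor>x\<rfloor> > 0" using False of_int_floor_le[of x] by linarith
    ultimately show ?thesis using x by (simp add: nat_add_distrib)
  qed
qed

lemma unit_cube_floor_ceiling:
  assumes T: "in_unit_cube k T"
  shows "(\<lambda>j. nat \<lfloor>T j\<rfloor>) \<le> corner1 k" "(\<lambda>j. nat \<lceil>T j\<rceil>) \<le> corner1 k"
    "\<And>j. nat \<lceil>T j\<rceil> = nat \<lfloor>T j\<rfloor> + (if frac_part T j > 0 then 1 else 0)"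
    "\<And>j. 0 \<le> frac_part T j" "\<And>j. frac_part T j < 1" "\<And>j. k \<le> j \<Longrightarrow> frac_part T j = 0"
    "\<And>j. real (nat \<lfloor>T j\<rfloor>) + frac_part T j = T j"
proof -
  have T01: "0 \<le> T j" "T j \<le> 1" for j using T by (cases "j < k"; auto simp: in_unit_cube_def)+
  have "nat \<lfloor>T j\<rfloor> \<le> 1" "nat \<lceil>T j\<rceil> \<le> 1" for j
    using T01[of j] by (auto simp: nat_le_iff floor_le_iff ceiling_le_iff)
  moreover have "nat \<lfloor>T j\<rfloor> = 0" "nat \<lceil>T j\<rceil> = 0" if "k \<le> j" for j
    using T that by (auto simp: in_unit_cube_def)
  ultimately show "(\<lambda>j. nat \<lfloor>T j\<rfloor>) \<le> corner1 k" "(\<lambda>j. nat \<lceil>T j\<rceil>) \<le> corner1 k"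
    by (auto simp: le_fun_def corner1_def not_less)
  show "nat \<lceil>T j\<rceil> = nat \<lfloor>T j\<rfloor> + (if frac_part T j > 0 then 1 else 0)" for j
    using cel_flr[OF T01(1)[of j]] by (simp add: frac_part_def)
  show "0 \<le> frac_part T j" "frac_part T j < 1" for j by (simp_all add: frac_part_def) linarith
  show "frac_part T j = 0" if "k \<le> j" for j using T that by (simp add: frac_part_def in_unit_cube_def)
  show "real (nat \<lfloor>T j\<rfloor>) + frac_part T j = T j" for j using T01(1)[of j] by (simp add: frac_part_def)
qed

text \<open>A point \<open>t\<close> of the cube of an arrow \<open>l = (p, r)\<close> lies in the cell of the segment
  \<open>l(\<lfloor>t\<rfloor>, \<lceil>t\<rceil>)\<close> with fractional part \<open>t - \<lfloor>t\<rfloor>\<close>; this is the cell that the realisation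
  relation attaches to \<open>(l, t)\<close>.\<close>

context
  fixes k n :: nat and l :: "vertex \<times> vertex" and t :: "nat \<Rightarrow> real"
  assumes k: "0 < k" and l: "l \<in> Arrows k n"
    and t: "t \<in> topspace (cube k (\<lambda>j. fst (snd l) j - fst (fst l) j))"
begin

text \<open>Elementary bounds: \<open>\<lfloor>t\<rfloor> \<le> \<lceil>t\<rceil>\<close> and \<open>p + \<lceil>t\<rceil> \<le> r\<close>, so the segment \<open>l(\<lfloor>t\<rfloor>, \<lceil>t\<rceil>)\<close>
  is defined.\<close>

lemma cube_point_ge: "0 \<le> t j" using t by (cases "j < k") (auto simp: topspace_cube)
lemma cube_point_beyond: "k \<le> j \<Longrightarrow> t j = 0" using t by (auto simp: topspace_cube)
lemma cube_point_le: "t j \<le> real (fst (snd l) j - fst (fst l) j)"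
  using t by (cases "j < k") (auto simp: topspace_cube)

lemma arrow_le: "fst (fst l) \<le> fst (snd l)"
  using l by (auto simp: Arrows_iff intro: vle_le)

lemma flr_le_cel: "flr t \<le> cel t"
  unfolding flr_def cel_def le_fun_def using cube_point_ge
  by (auto intro!: nat_mono ceiling_mono le_of_int_ceiling floor_le_ceiling)

lemma cel_bound: "(\<lambda>j. fst (fst l) j + cel t j) \<le> fst (snd l)"
  unfolding le_fun_def cel_def
proof
  fix j
  have "t j \<le> real (fst (snd l) j - fst (fst l) j)" by (rule cube_point_le)
  then have "\<lceil>t j\<rceil> \<le> int (fst (snd l) j - fst (fst l) j)" by (simp add: ceiling_le_iff)
  moreover have "fst (fst l) j \<le> fst (snd l) j" using arrow_le by (simp add: le_fun_def)
  ultimately show "fst (fst l) j + nat \<lceil>t j\<rceil> \<le> fst (snd l) j" by linarith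
qed

lemma cell_seg_props:
  "poset_seg l (flr t) (cel t) \<in> Arrows k n"
  "fst (fst (poset_seg l (flr t) (cel t))) = (\<lambda>j. fst (fst l) j + flr t j)"
  "fst (snd (poset_seg l (flr t) (cel t))) = (\<lambda>j. fst (fst l) j + cel t j)"
  by (rule poset_seg_props[OF l flr_le_cel cel_bound])+

lemma seg_cell_valid: "valid_cell k n (poset_seg l (flr t) (cel t)) (frac_part t)"
  unfolding valid_cell_def
proof (intro conjI allI impI)
  show "poset_seg l (flr t) (cel t) \<in> Arrows k n" by (rule cell_seg_props(1))
  fix j
  show "0 \<le> frac_part t j" "frac_part t j < 1" by (simp_all add: frac_part_def) linarith
  show "fst (snd (poset_seg l (flr t) (cel t))) j = fst (fst (poset_seg l (flr t) (cel t))) j + (if 0 < frac_part t j then 1 else 0)"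
    using cell_seg_props(2,3) cel_flr[OF cube_point_ge[of j]] by (simp add: frac_part_def flr_def cel_def)
next
  fix j assume "k \<le> j" then show "frac_part t j = 0" using cube_point_beyond by (simp add: frac_part_def)
qed

lemma seg_cell_coords: "cell_coords (fst (poset_seg l (flr t) (cel t))) (frac_part t) = (\<lambda>j. real (fst (fst l) j) + t j)"
proof
  fix j
  have "real (nat \<lfloor>t j\<rfloor>) = of_int \<lfloor>t j\<rfloor>" using cube_point_ge[of j] by simp
  then show "cell_coords (fst (poset_seg l (flr t) (cel t))) (frac_part t) j = real (fst (fst l) j) + t j"
    using cell_seg_props(2) by (simp add: cell_coords_def frac_part_def flr_def)
qed

text \<open>On the whole cube of \<open>l\<close> the cell map is given by a single formula in terms of the
  ends of \<open>l\<close>: where the cell data differ from those of \<open>l\<close>, they do not matter.\<close>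

lemma cube_point_box: "in_unit_cube k (\<lambda>j. real (fst (fst l) j) + t j)"
proof -
  have "valid_cell k n (fst (poset_seg l (flr t) (cel t)), snd (poset_seg l (flr t) (cel t))) (frac_part t)"
    using seg_cell_valid by simp
  then show ?thesis using cell_coords_box[OF k] seg_cell_coords by metis
qed

lemma cell_lower_sign:
  "tag_sign (fst (poset_seg l (flr t) (cel t))) * (1 - cmax k (\<lambda>j. real (fst (fst l) j) + t j)) =
   tag_sign (fst l) * (1 - cmax k (\<lambda>j. real (fst (fst l) j) + t j))"
proof (cases "fst (poset_seg l (flr t) (cel t)) = fst l")
  case False
  then have "(\<lambda>j. fst (fst l) j + flr t j) \<noteq> fst (fst l)" by (auto simp: poset_seg_def between_def)
  then obtain j where "flr t j \<noteq> 0" by (auto simp: fun_eq_iff)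
  then have tj: "t j \<ge> 1" by (simp add: flr_def)
  then have "j < k" using cube_point_beyond[of j] by (cases "j < k") auto
  \<comment> \<open>a coordinate of the cube point reaches \<open>1\<close>, so the first coordinate vanishes\<close>
  then have "cmax k (\<lambda>j. real (fst (fst l) j) + t j) = 1"
    using tj cmax_ge[of j k "\<lambda>j. real (fst (fst l) j) + t j"] cmax_box[OF k cube_point_box] by simp
  then show ?thesis by simp
qed simp

lemma cell_upper_sign:
  "tag_sign (snd (poset_seg l (flr t) (cel t))) * cmin k (\<lambda>j. real (fst (fst l) j) + t j) =
   tag_sign (snd l) * cmin k (\<lambda>j. real (fst (fst l) j) + t j)"
proof (cases "snd (poset_seg l (flr t) (cel t)) = snd l")
  case False
  have r: "snd l \<in> Vert k n" and pr: "vle (fst l) (snd l)" using l by (auto simp: Arrows_iff)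
  have "(\<lambda>j. fst (fst l) j + cel t j) \<noteq> fst (snd l)"
    using False vle_eq[OF pr] by (auto simp: poset_seg_def between_def split: if_splits)
  then obtain j where j: "fst (fst l) j + cel t j \<noteq> fst (snd l) j" by (auto simp: fun_eq_iff)
  have le: "fst (fst l) j + cel t j \<le> fst (snd l) j" using cel_bound by (simp add: le_fun_def)
  have "j < k" using j le le_corner1_beyond[OF Vert_le_corner1[OF r], of j] by (cases "j < k") auto
  have "cel t j = 0" "fst (fst l) j = 0" using j le Vert_le1[OF r, of j] by auto
  then have "t j = 0" using cube_point_ge[of j] by (simp add: cel_def)
  \<comment> \<open>a coordinate of the cube point is \<open>0\<close>, so the second coordinate vanishes\<close>
  then have "cmin k (\<lambda>j. real (fst (fst l) j) + t j) = 0"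
    using \<open>fst (fst l) j = 0\<close> cmin_le[OF \<open>j < k\<close>, of "\<lambda>j. real (fst (fst l) j) + t j"]
      cmin_box[OF k cube_point_box] by simp
  then show ?thesis by simp
qed simp

lemma cell_colour:
  "with_colour k (snd (snd (snd (poset_seg l (flr t) (cel t)))))
     (cube_sphere k (tag_sign (fst l)) (tag_sign (snd l)) (\<lambda>j. real (fst (fst l) j) + t j)) =
   with_colour k (snd (snd (snd l)))
     (cube_sphere k (tag_sign (fst l)) (tag_sign (snd l)) (\<lambda>j. real (fst (fst l) j) + t j))"
proof (cases "(\<lambda>j. fst (fst l) j + cel t j) = fst (fst l) \<and> fst l \<noteq> snd l")
  case True
  \<comment> \<open>the cell is the initial vertex; the colours can only differ if it is the base point\<close>
  have pr: "vle (fst l) (snd l)" using l by (auto simp: Arrows_iff)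
  show ?thesis
  proof (cases "fst l = base_vertex")
    case pz: True
    have "cel t j = 0" for j using True by (simp add: fun_eq_iff)
    then have "t j = 0" for j using cube_point_ge[of j] by (simp add: cel_def) (meson order.antisym)
    then have "cmax k (\<lambda>j. real (fst (fst l) j) + t j) = 0"
      using cmax_in[OF k, of "\<lambda>j. real (fst (fst l) j) + t j"] pz by (auto simp: base_vertex_def corner0_def)
    then have "cube_sphere k (tag_sign (fst l)) (tag_sign (snd l)) (\<lambda>j. real (fst (fst l) j) + t j) 0 = 1"
      using pz by (simp add: cube_sphere_def tag_sign_def base_vertex_def)
    then show ?thesis by (rule with_colour_base)
  next
    case False
    then have "snd (snd (fst l)) = snd (snd (snd l))" using vle_colour[OF pr] by simp
    then show ?thesis using True by (simp add: poset_seg_def between_def)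
  qed
next
  case False
  then show ?thesis by (auto simp: poset_seg_def between_def)
qed

end

lemma cell_map_seg:
  assumes k: "0 < k" and l: "l \<in> Arrows k n"
    and t: "t \<in> topspace (cube k (\<lambda>j. fst (snd l) j - fst (fst l) j))"
  shows "cell_map k (poset_seg l (flr t) (cel t)) (frac_part t) =
         with_colour k (snd (snd (snd l)))
           (cube_sphere k (tag_sign (fst l)) (tag_sign (snd l)) (\<lambda>j. real (fst (fst l) j) + t j))"
proof -
  have "cube_sphere k (tag_sign (fst (poset_seg l (flr t) (cel t)))) (tag_sign (snd (poset_seg l (flr t) (cel t))))
          (\<lambda>j. real (fst (fst l) j) + t j) =
        cube_sphere k (tag_sign (fst l)) (tag_sign (snd l)) (\<lambda>j. real (fst (fst l) j) + t j)"
    using cell_lower_sign[OF k l t] cell_upper_sign[OF k l t] by (auto simp: cube_sphere_def fun_eq_iff)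
  then show ?thesis
    using cell_colour[OF k l t] seg_cell_coords[OF k l t] by (simp add: cell_map_def)
qed

section \<open>The realisation of the sphere \<open>k\<close>-graph\<close>

definition cells :: "nat \<Rightarrow> nat \<Rightarrow> (nat \<times> (nat \<Rightarrow> real)) topology" where
  "cells k n = sum_topology (\<lambda>m. cube k (deg (sphere_kgraph k n) m)) (Mor (sphere_kgraph k n))"

definition decode :: "nat \<Rightarrow> nat \<Rightarrow> nat \<Rightarrow> vertex \<times> vertex" where
  "decode k n m = inv_into (Arrows k n) (code k n) m"

definition rmap :: "nat \<Rightarrow> nat \<Rightarrow> nat \<times> (nat \<Rightarrow> real) \<Rightarrow> (nat \<Rightarrow> real)" where
  "rmap k n p = cell_map k (poset_seg (decode k n (fst p)) (flr (snd p)) (cel (snd p))) (frac_part (snd p))"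

text \<open>Basic facts: points of \<open>cells\<close> are pairs of an arrow and a point of its cube, \<open>cells\<close>
  is compact, and the realisation map is continuous since it is given by the continuous
  formula \<open>cell_map_seg\<close> on each cube.\<close>

lemma cells_point:
  assumes "p \<in> topspace (cells k n)"
  obtains l t where "l \<in> Arrows k n" "p = (code k n l, t)"
    "t \<in> topspace (cube k (\<lambda>j. fst (snd l) j - fst (fst l) j))"
  using assms by (auto simp: cells_def sphere_kgraph_Mor sphere_kgraph_deg)

lemma rmap_code:
  "l \<in> Arrows k n \<Longrightarrow> rmap k n (code k n l, t) = cell_map k (poset_seg l (flr t) (cel t)) (frac_part t)"
  using inj_code[of k n] by (simp add: rmap_def decode_def Mor_sphere_poset)

lemma compact_space_cells: "compact_space (cells k n)"
  unfolding cells_def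
  by (rule compact_space_sum_topology) (simp_all add: sphere_kgraph_Mor finite_Arrows compact_space_cube)

lemma continuous_rmap:
  assumes k: "0 < k"
  shows "continuous_map (cells k n) (powertop_real UNIV) (rmap k n)"
  unfolding cells_def
proof (rule continuous_map_from_sum_topology)
  fix m assume "m \<in> Mor (sphere_kgraph k n)"
  then obtain l where l: "l \<in> Arrows k n" "m = code k n l" by (auto simp: sphere_kgraph_Mor)
  have "continuous_map (cube k (\<lambda>j. fst (snd l) j - fst (fst l) j)) (powertop_real UNIV)
      (\<lambda>t. with_colour k (snd (snd (snd l)))
             (cube_sphere k (tag_sign (fst l)) (tag_sign (snd l)) (\<lambda>j. real (fst (fst l) j) + t j)))"
    by (intro continuous_cube_sphere[OF k] continuous_intros continuous_cube_proj)
  then show "continuous_map (cube k (deg (sphere_kgraph k n) m)) (powertop_real UNIV) (\<lambda>t. rmap k n (m, t))"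
    unfolding l(2) sphere_kgraph_deg[OF l(1)]
    by (rule continuous_map_eq) (simp add: rmap_code[OF l(1)] cell_map_seg[OF k l(1)])
qed

lemma real_rel_sphere_kgraph:
  assumes k: "0 < k"
    and l: "l \<in> Arrows k n" "s \<in> topspace (cube k (\<lambda>j. fst (snd l) j - fst (fst l) j))"
    and l': "l' \<in> Arrows k n" "t \<in> topspace (cube k (\<lambda>j. fst (snd l') j - fst (fst l') j))"
  shows "real_rel (sphere_kgraph k n) (code k n l, s) (code k n l', t) \<longleftrightarrow>
           poset_seg l (flr s) (cel s) = poset_seg l' (flr t) (cel t) \<and> frac_part s = frac_part t"
proof -
  have "seg (sphere_kgraph k n) (code k n l) (flr s) (cel s) = code k n (poset_seg l (flr s) (cel s))"
    "seg (sphere_kgraph k n) (code k n l') (flr t) (cel t) = code k n (poset_seg l' (flr t) (cel t))"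
    by (rule seg_sphere_kgraph[OF l(1) flr_le_cel[OF k l] cel_bound[OF k l]],
        rule seg_sphere_kgraph[OF l'(1) flr_le_cel[OF k l'] cel_bound[OF k l']])
  then show ?thesis
    unfolding real_rel_def using code_eq_iff[OF cell_seg_props(1)[OF k l] cell_seg_props(1)[OF k l']]
    by (simp add: frac_part_def)
qed

lemma real_rel_iff_rmap:
  assumes k: "0 < k" and p: "p \<in> topspace (cells k n)" and q: "q \<in> topspace (cells k n)"
  shows "real_rel (sphere_kgraph k n) p q \<longleftrightarrow> rmap k n p = rmap k n q"
proof -
  obtain l s where l: "l \<in> Arrows k n" "p = (code k n l, s)"
      "s \<in> topspace (cube k (\<lambda>j. fst (snd l) j - fst (fst l) j))"
    using cells_point[OF p] by blast
  obtain l' t where l': "l' \<in> Arrows k n" "q = (code k n l', t)"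
      "t \<in> topspace (cube k (\<lambda>j. fst (snd l') j - fst (fst l') j))"
    using cells_point[OF q] by blast
  have v: "valid_cell k n (fst (poset_seg l (flr s) (cel s)), snd (poset_seg l (flr s) (cel s))) (frac_part s)"
    "valid_cell k n (fst (poset_seg l' (flr t) (cel t)), snd (poset_seg l' (flr t) (cel t))) (frac_part t)"
    using seg_cell_valid[OF k l(1,3)] seg_cell_valid[OF k l'(1,3)] by simp_all
  have "cell_map k (poset_seg l (flr s) (cel s)) (frac_part s) = cell_map k (poset_seg l' (flr t) (cel t)) (frac_part t)
      \<Longrightarrow> poset_seg l (flr s) (cel s) = poset_seg l' (flr t) (cel t) \<and> frac_part s = frac_part t"
    using cell_map_inj[OF k v] by (metis prod.collapse)
  then show ?thesis
    unfolding l(2) l'(2) real_rel_sphere_kgraph[OF k l(1,3) l'(1,3)] rmap_code[OF l(1)] rmap_code[OF l'(1)]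
    by auto
qed

theorem realisation_homeomorphic_rmap_image:
  assumes "0 < k"
  shows "realisation k (sphere_kgraph k n) homeomorphic_space
           subtopology (powertop_real UNIV) (rmap k n ` topspace (cells k n))"
  using quotient_homeomorphic_to_image[OF real_rel_iff_rmap[OF assms] compact_space_cells
      continuous_rmap[OF assms] Hausdorff_powertop_real] assms
  by (simp add: realisation_def cells_def)

lemma Vert_colour_lt: "e \<in> Vert k n \<Longrightarrow> 0 < n \<Longrightarrow> snd (snd e) < n"
  unfolding Vert_def by (auto split: if_splits)

lemma cell_map_in_wedge_image:
  assumes k: "0 < k" and n: "0 < n" and vk: "valid_cell k n (u, v) f"
  shows "cell_map k (u, v) f \<in> wedge_map k ` topspace (sum_topology (\<lambda>i. nsphere k) {..<n})"
proof -
  define S where "S = cube_sphere k (tag_sign u) (tag_sign v) (cell_coords u f)"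
  have "gauge k S = 1"
    unfolding S_def by (rule gauge_cube_sphere[OF k cell_coords_box[OF k vk] abs_tag_sign abs_tag_sign])
  moreover have "\<And>j. k < j \<Longrightarrow> S j = 0" by (simp add: S_def cube_sphere_beyond[OF k])
  ultimately obtain x where x: "x \<in> topspace (nsphere k)"
      "wedge_map k (snd (snd v), x) = with_colour k (snd (snd v)) S"
    using gauge_sphere_in_wedge_image by blast
  have "snd (snd v) < n" using Vert_colour_lt[OF valid_cell_upper[OF k vk] n] .
  then have "(snd (snd v), x) \<in> topspace (sum_topology (\<lambda>i. nsphere k) {..<n})" using x(1) by simp
  then show ?thesis using x(2) by (force simp: cell_map_def S_def)
qed

lemma valid_cell_point:
  assumes vk: "valid_cell k n (u, v) f"
  shows "(code k n (u, v), f) \<in> topspace (cells k n)"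
    and "rmap k n (code k n (u, v), f) = cell_map k (u, v) f"
proof -
  have uv: "(u, v) \<in> Arrows k n" "vle u v" using vk by (simp_all add: valid_cell_def Arrows_iff)
  have f01: "0 \<le> f j" "f j < 1" for j using vk by (simp_all add: valid_cell_def)
  have step: "fst v j = fst u j + (if f j > 0 then 1 else 0)" for j using vk by (simp add: valid_cell_def)
  have "f \<in> topspace (cube k (\<lambda>j. fst v j - fst u j))"
    unfolding topspace_cube using vk step by (auto simp: valid_cell_def less_le)
  then show "(code k n (u, v), f) \<in> topspace (cells k n)"
    using uv by (simp add: cells_def sphere_kgraph_Mor sphere_kgraph_deg)
  have flr0: "flr f = (\<lambda>j. 0)" using f01 by (simp add: flr_def fun_eq_iff floor_eq_iff)
  have "\<lfloor>f j\<rfloor> = 0" for j using f01[of j] by (simp add: floor_eq_iff)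
  then have "nat \<lceil>f j\<rceil> = (if f j > 0 then 1 else 0)" for j
    using cel_flr[OF f01(1)[of j]] by simp
  then have cel1: "(\<lambda>j. fst u j + cel f j) = fst v" using step by (simp add: cel_def fun_eq_iff)
  have "poset_seg (u, v) (flr f) (cel f) = (u, v)"
    using flr0 cel1 vle_eq[OF uv(2)] by (auto simp: poset_seg_def between_def)
  moreover have "frac_part f = f" using f01 by (simp add: frac_part_def fun_eq_iff floor_eq_iff)
  ultimately show "rmap k n (code k n (u, v), f) = cell_map k (u, v) f"
    using uv(1) by (simp add: rmap_code)
qed

text \<open>Every point of the unit cube lies in a valid cell of any given colour, with prescribed
  tag bits at the bottom and at the top corner: the cell between \<open>\<lfloor>T\<rfloor>\<close> and \<open>\<lceil>T\<rceil>\<close>.\<close>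

lemma cube_point_cell:
  assumes k: "0 < k" and T: "in_unit_cube k T" and i: "i < n" and b: "b0 \<le> 1" "b1 \<le> 1"
  obtains u v f where "valid_cell k n (u, v) f" "cell_coords u f = T"
    "fst u = corner0 \<Longrightarrow> fst (snd u) = b0" "fst v = corner1 k \<Longrightarrow> fst (snd v) = b1"
    "v \<noteq> base_vertex \<Longrightarrow> snd (snd v) = i"
proof -
  define h0 where "h0 = (\<lambda>j. nat \<lfloor>T j\<rfloor>)"
  define h1 where "h1 = (\<lambda>j. nat \<lceil>T j\<rceil>)"
  define f where "f = frac_part T"
  note fl = unit_cube_floor_ceiling[OF T, folded f_def]
  have hc: "h0 \<le> corner1 k" "h1 \<le> corner1 k" using fl(1,2) by (simp_all add: h0_def h1_def)
  have hf: "h1 j = h0 j + (if f j > 0 then 1 else 0)" for j using fl(3) by (simp add: h0_def h1_def)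
  note f01 = fl(4,5) and fb = fl(6)
  have Tf: "cell_coords (h0, b0, i) f = T" using fl(7) by (simp add: cell_coords_def h0_def)
  have h01: "h0 \<le> h1" using hf by (simp add: le_fun_def)
  have zo: "corner0 \<noteq> corner1 k" by (rule corner0_ne_corner1[OF k])
  define u where "u = (if h0 = corner0 then (corner0, b0, if b0 = 0 then 0 else i)
                       else (h0, if h0 = corner1 k then b1 else 0, i))"
  define v where "v = (if h1 = corner0 then u else (h1, if h1 = corner1 k then b1 else 0, i))"
  have fu: "fst u = h0" by (simp add: u_def)
  have h1z: "h0 = corner0" if "h1 = corner0" using h01 that le_corner0_iff by simp
  have fv: "fst v = h1" using h1z fu by (simp add: v_def)
  have uV: "u \<in> Vert k n" using hc i b zo by (auto simp: u_def Vert_def)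
  have vV: "v \<in> Vert k n" using hc i b zo uV by (auto simp: v_def Vert_def)
  have cu: "u = base_vertex \<or> snd (snd u) = i" by (auto simp: u_def base_vertex_def)
  have "vle u v"
  proof (cases "h1 = corner0 \<or> h0 = h1")
    case True then show ?thesis using h1z by (auto simp: u_def v_def)
  next
    case False then show ?thesis using h01 fu fv cu by (auto simp: vle_def v_def)
  qed
  then have "valid_cell k n (u, v) f"
    unfolding valid_cell_def using uV vV f01 fb hf fu fv by (simp add: Arrows_iff)
  moreover have "cell_coords u f = T" using Tf fu by (simp add: cell_coords_def)
  moreover have "fst (snd u) = b0" if "fst u = corner0" using that fu by (simp add: u_def)
  moreover have "fst (snd v) = b1" if "fst v = corner1 k" using that fv zo by (simp add: v_def)
  moreover have "snd (snd v) = i" if "v \<noteq> base_vertex"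
    using that b by (auto simp: v_def u_def base_vertex_def split: if_splits)
  ultimately show ?thesis using that by blast
qed

lemma rmap_in_wedge_image:
  assumes k: "0 < k" and n: "0 < n" and p: "p \<in> topspace (cells k n)"
  shows "rmap k n p \<in> wedge_map k ` topspace (sum_topology (\<lambda>i. nsphere k) {..<n})"
proof -
  obtain l t where l: "l \<in> Arrows k n" "p = (code k n l, t)"
      "t \<in> topspace (cube k (\<lambda>j. fst (snd l) j - fst (fst l) j))"
    using cells_point[OF p] by blast
  have "valid_cell k n (fst (poset_seg l (flr t) (cel t)), snd (poset_seg l (flr t) (cel t))) (frac_part t)"
    using seg_cell_valid[OF k l(1,3)] by simp
  from cell_map_in_wedge_image[OF k n this] show ?thesis
    using l by (simp add: rmap_code)
qed

text \<open>Every point of the wedge is the image of a cell: normalise to the gauge sphere, take the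
  cube point given by \<open>cube_sphere_preimage\<close>, and choose the tag bits from the signs of the
  first two coordinates.\<close>

lemma wedge_map_in_rmap_image:
  assumes k: "0 < k" and i: "i < n" and x: "x \<in> topspace (nsphere k)"
  shows "wedge_map k (i, x) \<in> rmap k n ` topspace (cells k n)"
proof -
  define S where "S = (\<lambda>j. x j / gauge k x)"
  have rS: "gauge k S = 1" using gauge_scale[OF gauge_pos[OF x], of k x] gauge_pos[OF x] by (simp add: S_def)
  have Sb: "S j = 0" if "k < j" for j using x that by (simp add: S_def nsphere_mem)
  obtain T where T: "in_unit_cube k T" "cmin k T = \<bar>S 1\<bar>" "cmax k T = 1 - \<bar>S 0\<bar>"
      "\<And>s1 s2 j. j \<in> {2..k} \<Longrightarrow> cube_sphere k s1 s2 T j = S j"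
    using cube_sphere_preimage[OF k rS] by blast
  have b: "(if S 0 < 0 then 1 else 0::nat) \<le> 1" "(if S 1 < 0 then 1 else 0::nat) \<le> 1" by simp_all
  obtain u v f where c: "valid_cell k n (u, v) f" "cell_coords u f = T"
      "fst u = corner0 \<Longrightarrow> fst (snd u) = (if S 0 < 0 then 1 else 0)"
      "fst v = corner1 k \<Longrightarrow> fst (snd v) = (if S 1 < 0 then 1 else 0)"
      "v \<noteq> base_vertex \<Longrightarrow> snd (snd v) = i"
    using cube_point_cell[OF k T(1) i b] by blast
  have "cube_sphere k (tag_sign u) (tag_sign v) T = S"
  proof (rule cube_sphere_eqI[OF T(3,2) T(4) Sb k])
    show "tag_sign u = (if S 0 < 0 then -1 else 1)" if "cmax k T < 1"
    proof -
      have "fst u = corner0" using that cmax_off_bottom[OF k c(1)] c(2) by force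
      then show ?thesis using c(3) by (simp add: tag_sign_def)
    qed
    show "tag_sign v = (if S 1 < 0 then -1 else 1)" if "0 < cmin k T"
    proof -
      have "fst v = corner1 k" using that cmin_off_top[OF k c(1)] c(2) by force
      then show ?thesis using c(4) by (simp add: tag_sign_def)
    qed
  qed
  moreover have "with_colour k (snd (snd v)) S = with_colour k i S"
  proof (cases "v = base_vertex")
    case True
    \<comment> \<open>the cell is the base vertex itself, whose image is the base point of every sphere\<close>
    then have "u = base_vertex" "T = (\<lambda>_. 0)" using valid_cell_base[OF k c(1)] c(2) by auto
    then have "\<not> S 0 < 0" "cmax k T = 0"
      using c(3) cmax_in[OF k, of T] by (auto simp: base_vertex_def split: if_splits)
    then have "S 0 = 1" using T(3) by simp
    then show ?thesis by (rule with_colour_base)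
  qed (simp add: c(5))
  ultimately have "rmap k n (code k n (u, v), f) = wedge_map k (i, x)"
    using valid_cell_point(2)[OF c(1)] c(2) by (simp add: cell_map_def wedge_map_def S_def)
  then show ?thesis using valid_cell_point(1)[OF c(1)] by (metis image_eqI)
qed

lemma rmap_image:
  assumes "0 < k" "0 < n"
  shows "rmap k n ` topspace (cells k n) = wedge_map k ` topspace (sum_topology (\<lambda>i. nsphere k) {..<n})"
  using rmap_in_wedge_image[OF assms] wedge_map_in_rmap_image[OF assms(1)] by auto

section \<open>Dimension zero\<close>

text \<open>For \<open>k = 0\<close> the realisation is the discrete set of vertices, and the wedge of \<open>n\<close>
  copies of the 0-sphere \<open>{1, -1}\<close> is a discrete set of \<open>n + 1\<close> points.\<close>

lemma discrete_topology_homeomorphic: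
  assumes "finite A" "finite B" "card A = card B"
  shows "discrete_topology A homeomorphic_space discrete_topology B"
proof -
  obtain h where h: "bij_betw h A B" using finite_same_card_bij[OF assms] by blast
  have "homeomorphic_maps (discrete_topology A) (discrete_topology B) h (inv_into A h)"
    unfolding homeomorphic_maps_def using h
    by (auto simp: bij_betw_def inv_into_f_f f_inv_into_f inv_into_into)
  then show ?thesis by (rule homeomorphic_maps_imp_homeomorphic_space)
qed

definition point_kgraph :: "nat \<Rightarrow> nat kgraph" where
  "point_kgraph n = \<lparr>Mor = {..n}, src = (\<lambda>x. x), rng = (\<lambda>x. x), comp = (\<lambda>a b. a), deg = (\<lambda>_ _. 0)\<rparr>"

lemma in_Nk_0: "in_Nk 0 m \<longleftrightarrow> m = (\<lambda>_. 0)"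
  by (auto simp: in_Nk_def fun_eq_iff)

lemma is_kgraph_point_kgraph: "is_kgraph 0 (point_kgraph n)"
  unfolding is_kgraph_def small_category_def
  by (auto simp: point_kgraph_def in_Nk_0 intro!: ex1I[of _ "(l, l)" for l])

lemma finite_point_kgraph: "finite_kgraph (point_kgraph n)"
  by (simp add: finite_kgraph_def point_kgraph_def)

lemma nsphere0: "topspace (nsphere 0) = {sphere_base, (\<lambda>j. if j = 0 then -1 else 0)}"
proof -
  have "x \<in> topspace (nsphere 0) \<longleftrightarrow> x = sphere_base \<or> x = (\<lambda>j. if j = 0 then -1 else 0)" for x :: "nat \<Rightarrow> real"
  proof
    assume "x \<in> topspace (nsphere 0)"
    then have a: "x 0 ^ 2 = 1" "\<forall>i>0. x i = 0" by (auto simp: nsphere_mem)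
    then have "x 0 = 1 \<or> x 0 = -1" by (simp add: power2_eq_1_iff)
    then show "x = sphere_base \<or> x = (\<lambda>j. if j = 0 then -1 else 0)"
      using a by (auto simp: sphere_base_def fun_eq_iff)
  next
    assume "x = sphere_base \<or> x = (\<lambda>j. if j = 0 then -1 else 0)"
    then show "x \<in> topspace (nsphere 0)" by (auto simp: nsphere_mem sphere_base_def)
  qed
  then show ?thesis by blast
qed

definition colour_point :: "nat \<Rightarrow> nat \<Rightarrow> real" where
  "colour_point i = (\<lambda>j. if j = 0 then -1 else if j = 1 then 2 * real i else 0)"

lemma wedge_map_image_0:
  "wedge_map 0 ` topspace (sum_topology (\<lambda>i. nsphere 0) {..<n}) =
     (if n = 0 then {} else insert sphere_base (colour_point ` {..<n}))"
proof -
  define m :: "nat \<Rightarrow> real" where "m = (\<lambda>j. if j = 0 then -1 else 0)"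
  have "gauge 0 m = 1" by (simp add: gauge_def spread_def m_def)
  then have "wedge_map 0 (i, m) = colour_point i" for i
    by (auto simp: wedge_map_def with_colour_def m_def colour_point_def fun_eq_iff)
  then have e: "(\<lambda>i. wedge_map 0 (i, m)) ` {..<n} = colour_point ` {..<n}" by simp
  have ts: "topspace (sum_topology (\<lambda>i. nsphere 0) {..<n}) =
      (\<lambda>i. (i, sphere_base)) ` {..<n} \<union> (\<lambda>i. (i, m)) ` {..<n}"
    by (auto simp: nsphere0 m_def)
  show ?thesis
    unfolding ts image_Un image_image e by (auto simp: wedge_map_base lessThan_empty_iff)
qed

lemma realisation_point_kgraph:
  assumes n: "1 \<le> n"
  shows "realisation 0 (point_kgraph n) homeomorphic_space sphere_wedge n 0"
proof -
  define W where "W = insert sphere_base (colour_point ` {..<n})"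
  have "inj_on colour_point {..<n}"
  proof (rule inj_onI)
    fix a b assume "colour_point a = colour_point b"
    from fun_cong[OF this, of 1] show "a = b" by (simp add: colour_point_def)
  qed
  moreover have "sphere_base \<notin> colour_point ` {..<n}"
    by (auto simp: sphere_base_def colour_point_def fun_eq_iff dest!: spec[of _ 0])
  ultimately have cardW: "card W = Suc n" by (simp add: W_def card_image)
  \<comment> \<open>a finite Hausdorff space is discrete\<close>
  have "subtopology (powertop_real UNIV) W = discrete_topology W"
    by (rule finite_topspace_imp_discrete_topology)
       (simp_all add: W_def Hausdorff_space_subtopology[OF Hausdorff_powertop_real])
  then have "sphere_wedge n 0 homeomorphic_space discrete_topology W"
    using sphere_wedge_homeomorphic_image[of n 0] wedge_map_image_0[of n] n by (simp add: W_def)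
  moreover have "vertices (point_kgraph n) = {..n}" by (auto simp: vertices_def point_kgraph_def)
  then have "realisation 0 (point_kgraph n) = discrete_topology ((\<lambda>v. {(v, \<lambda>i. 0)}) ` {..n})"
    by (simp add: realisation_def)
  moreover have "card ((\<lambda>v. {(v, \<lambda>i::nat. 0::real)}) ` {..n}) = Suc n"
    by (subst card_image) (auto simp: inj_on_def)
  ultimately show ?thesis
    using discrete_topology_homeomorphic[of _ W] cardW homeomorphic_space_sym homeomorphic_space_trans
    by (metis finite_imageI finite_atMost W_def finite_insert finite_lessThan)
qed

lemma realisation_sphere_kgraph:
  assumes "0 < k" "1 \<le> n"
  shows "realisation k (sphere_kgraph k n) homeomorphic_space sphere_wedge n k"
  using realisation_homeomorphic_rmap_image[OF assms(1)] rmap_image[OF assms(1)] assms(2)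
    sphere_wedge_homeomorphic_image[of n k] homeomorphic_space_sym homeomorphic_space_trans
  by (metis less_le_trans zero_less_one)

theorem corollary5p12:
  fixes n k :: nat
  assumes "n \<ge> 1"
  shows "\<exists>L :: nat kgraph. is_kgraph k L \<and> finite_kgraph L \<and>
           realisation k L homeomorphic_space sphere_wedge n k"
proof (cases "k = 0")
  case True
  then show ?thesis
    using is_kgraph_point_kgraph finite_point_kgraph realisation_point_kgraph[OF assms] by blast
next
  case False
  then show ?thesis
    using is_kgraph_sphere_kgraph finite_sphere_kgraph realisation_sphere_kgraph assms by blast
qed

end
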